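(* Let $\mathcal{F}=(f_s:I_s\to[n]\mid s\in S)$ be an $S$-claw in $\Delta_+$ ($S$ a finite set, $n\ge -1$). (a) $\mathcal{F}$ is a candidate $S$-covering in $\Delta_+$ if and only if $\mathcal{F}$ is backwards compatible; in this case its Čech cube $\check{C}\mathcal{F}:\mathcal{P}(S)^{\mathrm{op}}\to\Delta_+$ is given by $$T\longmapsto \mathop{\star}_{i\in[n]}\ \prod_{t\in T}f_t^{-1}\{i\},$$ where each $f_t^{-1}\{i\}$ carries the order induced from $I_t$, the product is the product poset (a singleton when $T=\emptyset$), $\star$ is ordered concatenation in increasing $i$, and the maps are induced by the projections. (b) The Čech cube $\check{C}\mathcal{F}$ is strongly biCartesian in $\Delta_+$ if and only if $\mathcal{F}$ is compatible.
   Context: $\Delta_+$ is the category of finite (possibly empty) linearly ordered sets and weakly monotone maps; $[n]=\{0<\dots<n\}$, $[-1]=\emptyset$. For a finite set $S$, $\mathcal{P}(S)$ is the poset of subsets. An $S$-claw on $[n]$ is a family of morphisms $f_s:I_s\to[n]$, $s\in S$. It is a candidate $S$-covering if it extends to a strongly Cartesian $S$-cube $Q:\mathcal{P}(S)^{\mathrm{op}}\to\Delta_+$ with $Q(\emptyset)=[n]$ and $Q(\{s\})\to Q(\emptyset)$ equal to $f_s$; strongly Cartesian (resp. strongly coCartesian, strongly biCartesian) means every square $Q(T\cup\{s,s'\})\to Q(T\cup\{s\}),Q(T\cup\{s'\})\to Q(T)$ ($s\neq s'\notin T$) is a pullback (resp. pushout, both). This extension (unique up to isomorphism) is the Čech cube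 $\check{C}\mathcal{F}$. The claw is backwards compatible if for each $i\in[n]$ there is at most one $s$ with $|f_s^{-1}\{i\}|>1$. It is compatible if (BC1) for each $i\in[n]$ there is at most one $s$ such that $f_s^{-1}\{i\}$ is not a singleton, and (BC2) for each $0<i\le n$ there is at most one $s$ such that $\{i-1,i\}\not\subseteq f_s(I_s)$. *)

theory Defs
  imports Main "HOL-Library.FuncSet"
begin

text \<open>Skeletal model of Delta_+: the object of size m is the ordinal {0..<m};
  so [n] has size n+1 and [-1] = empty has size 0.  A morphism m -> k is a function
  on nat, weakly monotone on {..<m} with values in {..<k}; two morphisms with domain m
  are equal iff they agree on {..<m}.\<close>

definition dmor :: "nat \<Rightarrow> nat \<Rightarrow> (nat \<Rightarrow> nat) \<Rightarrow> bool" where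
  "dmor m k g \<longleftrightarrow> (\<forall>i<m. g i < k) \<and> (\<forall>i j. i \<le> j \<longrightarrow> j < m \<longrightarrow> g i \<le> g j)"

definition meq :: "nat \<Rightarrow> (nat \<Rightarrow> nat) \<Rightarrow> (nat \<Rightarrow> nat) \<Rightarrow> bool" where
  "meq m g h \<longleftrightarrow> (\<forall>i<m. g i = h i)"

definition is_square :: "nat \<Rightarrow> nat \<Rightarrow> nat \<Rightarrow> nat \<Rightarrow> (nat \<Rightarrow> nat) \<Rightarrow> (nat \<Rightarrow> nat)
    \<Rightarrow> (nat \<Rightarrow> nat) \<Rightarrow> (nat \<Rightarrow> nat) \<Rightarrow> bool" where
  "is_square a b c d p q u v \<longleftrightarrow> dmor a b p \<and> dmor a c q \<and> dmor b d u \<and> dmor c d v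
     \<and> meq a (u \<circ> p) (v \<circ> q)"

definition is_pullback :: "nat \<Rightarrow> nat \<Rightarrow> nat \<Rightarrow> nat \<Rightarrow> (nat \<Rightarrow> nat) \<Rightarrow> (nat \<Rightarrow> nat)
    \<Rightarrow> (nat \<Rightarrow> nat) \<Rightarrow> (nat \<Rightarrow> nat) \<Rightarrow> bool" where
  "is_pullback a b c d p q u v \<longleftrightarrow> is_square a b c d p q u v \<and>
     (\<forall>x g h. dmor x b g \<and> dmor x c h \<and> meq x (u \<circ> g) (v \<circ> h) \<longrightarrow>
        (\<exists>w. dmor x a w \<and> meq x (p \<circ> w) g \<and> meq x (q \<circ> w) h \<and>
           (\<forall>w'. dmor x a w' \<and> meq x (p \<circ> w') g \<and> meq x (q \<circ> w') h \<longrightarrow> meq x w' w)))"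

definition is_pushout :: "nat \<Rightarrow> nat \<Rightarrow> nat \<Rightarrow> nat \<Rightarrow> (nat \<Rightarrow> nat) \<Rightarrow> (nat \<Rightarrow> nat)
    \<Rightarrow> (nat \<Rightarrow> nat) \<Rightarrow> (nat \<Rightarrow> nat) \<Rightarrow> bool" where
  "is_pushout a b c d p q u v \<longleftrightarrow> is_square a b c d p q u v \<and>
     (\<forall>x g h. dmor b x g \<and> dmor c x h \<and> meq a (g \<circ> p) (h \<circ> q) \<longrightarrow>
        (\<exists>w. dmor d x w \<and> meq b (w \<circ> u) g \<and> meq c (w \<circ> v) h \<and>
           (\<forall>w'. dmor d x w' \<and> meq b (w' \<circ> u) g \<and> meq c (w' \<circ> v) h \<longrightarrow> meq d w' w)))"

definition is_cube :: "'a set \<Rightarrow> ('a set \<Rightarrow> nat) \<Rightarrow> ('a set \<Rightarrow> 'a set \<Rightarrow> nat \<Rightarrow> nat) \<Rightarrow> bool" where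
  "is_cube S Q M \<longleftrightarrow>
     (\<forall>T T'. T \<subseteq> T' \<longrightarrow> T' \<subseteq> S \<longrightarrow> dmor (Q T') (Q T) (M T T')) \<and>
     (\<forall>T. T \<subseteq> S \<longrightarrow> meq (Q T) (M T T) id) \<and>
     (\<forall>T T' T''. T \<subseteq> T' \<longrightarrow> T' \<subseteq> T'' \<longrightarrow> T'' \<subseteq> S \<longrightarrow>
        meq (Q T'') (M T T' \<circ> M T' T'') (M T T''))"

definition strongly_cartesian :: "'a set \<Rightarrow> ('a set \<Rightarrow> nat) \<Rightarrow> ('a set \<Rightarrow> 'a set \<Rightarrow> nat \<Rightarrow> nat) \<Rightarrow> bool" where
  "strongly_cartesian S Q M \<longleftrightarrow>
     (\<forall>T s s'. T \<subseteq> S \<longrightarrow> s \<in> S \<longrightarrow> s' \<in> S \<longrightarrow> s \<noteq> s' \<longrightarrow> s \<notin> T \<longrightarrow> s' \<notin> T \<longrightarrow>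
        is_pullback (Q (T \<union> {s, s'})) (Q (T \<union> {s})) (Q (T \<union> {s'})) (Q T)
          (M (T \<union> {s}) (T \<union> {s, s'})) (M (T \<union> {s'}) (T \<union> {s, s'}))
          (M T (T \<union> {s})) (M T (T \<union> {s'})))"

definition strongly_cocartesian :: "'a set \<Rightarrow> ('a set \<Rightarrow> nat) \<Rightarrow> ('a set \<Rightarrow> 'a set \<Rightarrow> nat \<Rightarrow> nat) \<Rightarrow> bool" where
  "strongly_cocartesian S Q M \<longleftrightarrow>
     (\<forall>T s s'. T \<subseteq> S \<longrightarrow> s \<in> S \<longrightarrow> s' \<in> S \<longrightarrow> s \<noteq> s' \<longrightarrow> s \<notin> T \<longrightarrow> s' \<notin> T \<longrightarrow>
        is_pushout (Q (T \<union> {s, s'})) (Q (T \<union> {s})) (Q (T \<union> {s'})) (Q T)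
          (M (T \<union> {s}) (T \<union> {s, s'})) (M (T \<union> {s'}) (T \<union> {s, s'}))
          (M T (T \<union> {s})) (M T (T \<union> {s'})))"

definition strongly_bicartesian :: "'a set \<Rightarrow> ('a set \<Rightarrow> nat) \<Rightarrow> ('a set \<Rightarrow> 'a set \<Rightarrow> nat \<Rightarrow> nat) \<Rightarrow> bool" where
  "strongly_bicartesian S Q M \<longleftrightarrow> strongly_cartesian S Q M \<and> strongly_cocartesian S Q M"

text \<open>An S-claw on [n]: N = n+1 is the size of [n]; f s : I s -> N for s in S.
  (Q,M) is a Cech cube of the claw: a strongly Cartesian S-cube with Q {} = [n],
  Q {s} = I_s and Q {s} -> Q {} equal to f s.\<close>

definition is_cech_cube :: "'a set \<Rightarrow> ('a \<Rightarrow> nat) \<Rightarrow> nat \<Rightarrow> ('a \<Rightarrow> nat \<Rightarrow> nat)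
    \<Rightarrow> ('a set \<Rightarrow> nat) \<Rightarrow> ('a set \<Rightarrow> 'a set \<Rightarrow> nat \<Rightarrow> nat) \<Rightarrow> bool" where
  "is_cech_cube S I N f Q M \<longleftrightarrow> is_cube S Q M \<and> strongly_cartesian S Q M \<and> Q {} = N \<and>
     (\<forall>s\<in>S. Q {s} = I s \<and> meq (I s) (M {} {s}) (f s))"

definition candidate_covering :: "'a set \<Rightarrow> ('a \<Rightarrow> nat) \<Rightarrow> nat \<Rightarrow> ('a \<Rightarrow> nat \<Rightarrow> nat) \<Rightarrow> bool" where
  "candidate_covering S I N f \<longleftrightarrow> (\<exists>Q M. is_cech_cube S I N f Q M)"

definition fiber :: "('a \<Rightarrow> nat) \<Rightarrow> ('a \<Rightarrow> nat \<Rightarrow> nat) \<Rightarrow> 'a \<Rightarrow> nat \<Rightarrow> nat set" where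
  "fiber I f s i = {j. j < I s \<and> f s j = i}"

definition backwards_compatible :: "'a set \<Rightarrow> ('a \<Rightarrow> nat) \<Rightarrow> nat \<Rightarrow> ('a \<Rightarrow> nat \<Rightarrow> nat) \<Rightarrow> bool" where
  "backwards_compatible S I N f \<longleftrightarrow>
     (\<forall>i<N. \<forall>s\<in>S. \<forall>s'\<in>S. card (fiber I f s i) > 1 \<longrightarrow> card (fiber I f s' i) > 1 \<longrightarrow> s = s')"

definition compatible :: "'a set \<Rightarrow> ('a \<Rightarrow> nat) \<Rightarrow> nat \<Rightarrow> ('a \<Rightarrow> nat \<Rightarrow> nat) \<Rightarrow> bool" where
  "compatible S I N f \<longleftrightarrow>
     (\<forall>i<N. \<forall>s\<in>S. \<forall>s'\<in>S. card (fiber I f s i) \<noteq> 1 \<longrightarrow> card (fiber I f s' i) \<noteq> 1 \<longrightarrow> s = s') \<and>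
     (\<forall>i. 0 < i \<longrightarrow> i < N \<longrightarrow> (\<forall>s\<in>S. \<forall>s'\<in>S.
        \<not> {i - 1, i} \<subseteq> f s ` {..<I s} \<longrightarrow> \<not> {i - 1, i} \<subseteq> f s' ` {..<I s'} \<longrightarrow> s = s'))"

text \<open>The explicit cube  T |-> concatenation over i<N of  prod_{t in T} f_t^{-1}{i}:
  elements (i, x) with x \<in> Pi_E T (fiber at i), ordered first by i, then by the
  product order; maps are induced by projections (restriction of x).\<close>

definition cech_obj :: "('a \<Rightarrow> nat) \<Rightarrow> nat \<Rightarrow> ('a \<Rightarrow> nat \<Rightarrow> nat) \<Rightarrow> 'a set \<Rightarrow> (nat \<times> ('a \<Rightarrow> nat)) set" where
  "cech_obj I N f T = {(i, x). i < N \<and> x \<in> (\<Pi>\<^sub>E t\<in>T. fiber I f t i)}"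

definition cech_le :: "'a set \<Rightarrow> nat \<times> ('a \<Rightarrow> nat) \<Rightarrow> nat \<times> ('a \<Rightarrow> nat) \<Rightarrow> bool" where
  "cech_le T p q \<longleftrightarrow> fst p < fst q \<or> (fst p = fst q \<and> (\<forall>t\<in>T. snd p t \<le> snd q t))"

definition cech_formula :: "'a set \<Rightarrow> ('a \<Rightarrow> nat) \<Rightarrow> nat \<Rightarrow> ('a \<Rightarrow> nat \<Rightarrow> nat)
    \<Rightarrow> ('a set \<Rightarrow> nat) \<Rightarrow> ('a set \<Rightarrow> 'a set \<Rightarrow> nat \<Rightarrow> nat) \<Rightarrow> bool" where
  "cech_formula S I N f Q M \<longleftrightarrow>
     (\<exists>\<phi> :: 'a set \<Rightarrow> nat \<Rightarrow> nat \<times> ('a \<Rightarrow> nat).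
        (\<forall>T. T \<subseteq> S \<longrightarrow>
           bij_betw (\<phi> T) {..<Q T} (cech_obj I N f T) \<and>
           (\<forall>k<Q T. \<forall>k'<Q T. k \<le> k' \<longleftrightarrow> cech_le T (\<phi> T k) (\<phi> T k'))) \<and>
        (\<forall>T T'. T \<subseteq> T' \<longrightarrow> T' \<subseteq> S \<longrightarrow> (\<forall>k<Q T'.
           \<phi> T (M T T' k) = (fst (\<phi> T' k), restrict (snd (\<phi> T' k)) T))))"

end

theory Submission
  imports Defs
begin

text \<open>Testing the pullback property against the one-point ordinal shows that in a
  strongly Cartesian cube an element of \<open>Q T\<close> is determined by, and can be assembled
  from, its images in \<open>Q \<emptyset> = [n]\<close> and in the \<open>Q {t} = I\<^sub>t\<close>. Induction along the
  pullback squares therefore identifies \<open>Q T\<close>, order included, with the pairs \<open>(i, x)\<close>,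
  \<open>x \<in> \<Prod>\<^sub>t\<^sub>\<in>\<^sub>T f\<^sub>t\<^sup>-\<^sup>1{i}\<close>, ordered by \<open>i\<close> and then by the product order.
  A cube exists exactly when these orders are linear, which is backwards compatibility,
  and then the ranks in these linear orders construct it.

  A pullback square of finite ordinals is a pushout as soon as its legs are jointly
  surjective, injective away from the image of the other leg, and generate the order of
  the target. In the Cech cube (BC1) yields the first two conditions in every square,
  and (BC2) supplies values hit by all coordinates through which the order is generated.
  Conversely, test maps into \<open>[1]\<close> show that the bottom squares can only be pushouts
  if (BC1) and (BC2) hold.\<close>

section \<open>Squares of finite ordinals\<close>

lemma dmor_less: "dmor m k g \<Longrightarrow> i < m \<Longrightarrow> g i < k"
  by (simp add: dmor_def)

lemma dmor_mono: "dmor m k g \<Longrightarrow> i \<le> j \<Longrightarrow> j < m \<Longrightarrow> g i \<le> g j"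
  by (simp add: dmor_def)

lemma dmor_less_imp_less: "dmor m k g \<Longrightarrow> i < m \<Longrightarrow> j < m \<Longrightarrow> g i < g j \<Longrightarrow> i < j"
  by (metis dmor_mono leD le_less_linear)

lemma dmor_const: "y < k \<Longrightarrow> dmor m k (\<lambda>_. y)"
  by (simp add: dmor_def)

lemma dmor_indicator:
  assumes "dmor m k g" and "\<And>x y. x \<le> y \<Longrightarrow> P x \<Longrightarrow> P y"
  shows "dmor m 2 (\<lambda>x. if P (g x) then 1 else 0)"
  unfolding dmor_def
proof (intro conjI allI impI)
  fix i j assume "i \<le> j" "j < m"
  have "g i \<le> g j" by (rule dmor_mono[OF assms(1) \<open>i \<le> j\<close> \<open>j < m\<close>])
  then show "(if P (g i) then 1 else 0) \<le> (if P (g j) then 1 else (0::nat))"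
    using assms(2) by auto
qed simp

lemma is_squareD:
  assumes "is_square a b c d p q u v"
  shows "dmor a b p" "dmor a c q" "dmor b d u" "dmor c d v" "\<And>\<alpha>. \<alpha> < a \<Longrightarrow> u (p \<alpha>) = v (q \<alpha>)"
  using assms by (auto simp: is_square_def meq_def)

lemma is_pullback_square: "is_pullback a b c d p q u v \<Longrightarrow> is_square a b c d p q u v"
  by (simp add: is_pullback_def)

lemma pullback_universal:
  assumes "is_pullback a b c d p q u v" "dmor x b g" "dmor x c h" "meq x (u \<circ> g) (v \<circ> h)"
  obtains w where "dmor x a w" "meq x (p \<circ> w) g" "meq x (q \<circ> w) h"
    "\<And>w'. dmor x a w' \<Longrightarrow> meq x (p \<circ> w') g \<Longrightarrow> meq x (q \<circ> w') h \<Longrightarrow> meq x w' w"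
  using assms unfolding is_pullback_def by blast

lemma pullback_jointly_surj:
  assumes pb: "is_pullback a b c d p q u v" and y: "y < b" and z: "z < c" and "u y = v z"
  shows "\<exists>w<a. p w = y \<and> q w = z"
proof -
  have "meq 1 (u \<circ> (\<lambda>_. y)) (v \<circ> (\<lambda>_. z))" using \<open>u y = v z\<close> by (simp add: meq_def)
  then obtain w where "dmor 1 a w" "meq 1 (p \<circ> w) (\<lambda>_. y)" "meq 1 (q \<circ> w) (\<lambda>_. z)"
    using pullback_universal[OF pb dmor_const[OF y] dmor_const[OF z]] by metis
  then show ?thesis by (intro exI[of _ "w 0"]) (simp add: dmor_def meq_def)
qed

lemma pullback_jointly_inj:
  assumes pb: "is_pullback a b c d p q u v" and "w < a" "w' < a" "p w = p w'" "q w = q w'"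
  shows "w = w'"
proof -
  note sq = is_squareD[OF is_pullback_square[OF pb]]
  have pw: "p w < b" and qw: "q w < c" using sq(1,2) \<open>w < a\<close> by (simp_all add: dmor_less)
  have "meq 1 (u \<circ> (\<lambda>_. p w)) (v \<circ> (\<lambda>_. q w))" using sq(5) \<open>w < a\<close> by (simp add: meq_def)
  then obtain w0 where unique: "\<And>w''. dmor 1 a w'' \<Longrightarrow> meq 1 (p \<circ> w'') (\<lambda>_. p w) \<Longrightarrow>
      meq 1 (q \<circ> w'') (\<lambda>_. q w) \<Longrightarrow> meq 1 w'' w0"
    using pullback_universal[OF pb dmor_const[OF pw] dmor_const[OF qw]] by metis
  have "meq 1 (\<lambda>_. w) w0" "meq 1 (\<lambda>_. w') w0"
    by (rule unique; use assms in \<open>simp add: dmor_const meq_def\<close>)+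
  then show ?thesis by (simp add: meq_def)
qed

lemma pullbackI:
  assumes sq: "is_square a b c d p q u v"
    and surj: "\<And>y z. y < b \<Longrightarrow> z < c \<Longrightarrow> u y = v z \<Longrightarrow> \<exists>w<a. p w = y \<and> q w = z"
    and reflect: "\<And>w w'. w < a \<Longrightarrow> w' < a \<Longrightarrow> p w \<le> p w' \<Longrightarrow> q w \<le> q w' \<Longrightarrow> w \<le> w'"
  shows "is_pullback a b c d p q u v"
  unfolding is_pullback_def
proof (intro conjI sq allI impI)
  fix x g h assume gh: "dmor x b g \<and> dmor x c h \<and> meq x (u \<circ> g) (v \<circ> h)"
  define w where "w j = (SOME \<alpha>. \<alpha> < a \<and> p \<alpha> = g j \<and> q \<alpha> = h j)" for j
  have w: "w j < a \<and> p (w j) = g j \<and> q (w j) = h j" if "j < x" for j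
    unfolding w_def
    by (rule someI_ex)
      (use surj[of "g j" "h j"] gh that dmor_less[of x b g j] dmor_less[of x c h j]
        in \<open>simp add: meq_def\<close>)
  have eq: "\<alpha> = \<alpha>'" if "\<alpha> < a" "\<alpha>' < a" "p \<alpha> = p \<alpha>'" "q \<alpha> = q \<alpha>'" for \<alpha> \<alpha>'
    using reflect[OF that(1,2)] reflect[OF that(2,1)] that by simp
  have "dmor x a w"
    unfolding dmor_def
  proof (intro conjI allI impI)
    fix i j assume "i \<le> j" "j < x"
    have "i < x" using \<open>i \<le> j\<close> \<open>j < x\<close> by simp
    have "g i \<le> g j" "h i \<le> h j" using gh \<open>i \<le> j\<close> \<open>j < x\<close> dmor_mono by blast+
    then show "w i \<le> w j" using w[OF \<open>i < x\<close>] w[OF \<open>j < x\<close>] reflect by simp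
  qed (simp add: w)
  moreover have "meq x (p \<circ> w) g" "meq x (q \<circ> w) h"
    using w by (auto simp: meq_def)
  moreover have "meq x w' w" if "dmor x a w'" "meq x (p \<circ> w') g" "meq x (q \<circ> w') h" for w'
    using that w eq dmor_less unfolding meq_def by (metis comp_apply)
  ultimately show "\<exists>w. dmor x a w \<and> meq x (p \<circ> w) g \<and> meq x (q \<circ> w) h \<and>
           (\<forall>w'. dmor x a w' \<and> meq x (p \<circ> w') g \<and> meq x (q \<circ> w') h \<longrightarrow> meq x w' w)"
    by (intro exI[of _ w]) auto
qed

lemma pushout_universal:
  assumes "is_pushout a b c d p q u v" "dmor b x g" "dmor c x h" "meq a (g \<circ> p) (h \<circ> q)"
  obtains w where "dmor d x w" "meq b (w \<circ> u) g" "meq c (w \<circ> v) h"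
    "\<And>w'. dmor d x w' \<Longrightarrow> meq b (w' \<circ> u) g \<Longrightarrow> meq c (w' \<circ> v) h \<Longrightarrow> meq d w' w"
  using assms unfolding is_pushout_def by blast

lemma is_pushout_square: "is_pushout a b c d p q u v \<Longrightarrow> is_square a b c d p q u v"
  by (simp add: is_pushout_def)

text \<open>The three necessary conditions below are detected by test maps into the ordinal
  \<open>{0 < 1}\<close> given by thresholds.\<close>

lemma pushout_jointly_surj:
  assumes po: "is_pushout a b c d p q u v" and "\<delta> < d"
  shows "(\<exists>\<beta><b. u \<beta> = \<delta>) \<or> (\<exists>\<gamma><c. v \<gamma> = \<delta>)"
proof (rule ccontr)
  assume miss: "\<not> ?thesis"
  note sq = is_squareD[OF is_pushout_square[OF po]]
  define g where "g \<beta> = (if \<delta> < u \<beta> then 1 else (0::nat))" for \<beta>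
  define h where "h \<gamma> = (if \<delta> < v \<gamma> then 1 else (0::nat))" for \<gamma>
  have g: "dmor b 2 g" unfolding g_def by (rule dmor_indicator[OF sq(3)]) simp
  have h: "dmor c 2 h" unfolding h_def by (rule dmor_indicator[OF sq(4)]) simp
  have "meq a (g \<circ> p) (h \<circ> q)" unfolding meq_def g_def h_def using sq(5) by simp
  then obtain w where unique:
    "\<And>w'. dmor d 2 w' \<Longrightarrow> meq b (w' \<circ> u) g \<Longrightarrow> meq c (w' \<circ> v) h \<Longrightarrow> meq d w' w"
    using pushout_universal[OF po g h] by metis
  have "meq d (\<lambda>e. if \<delta> \<le> e then 1 else 0) w"
    by (rule unique) (use miss in \<open>auto simp: dmor_def meq_def g_def h_def\<close>)
  moreover have "meq d (\<lambda>e. if \<delta> < e then 1 else 0) w"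
    by (rule unique) (auto simp: dmor_def meq_def g_def h_def)
  ultimately show False using \<open>\<delta> < d\<close> by (force simp: meq_def)
qed

lemma pushout_inj_off_image:
  assumes po: "is_pushout a b c d p q u v" and miss: "\<not> (\<exists>\<beta><b. u \<beta> = \<delta>)"
    and "\<gamma> < c" "\<gamma>' < c" "v \<gamma> = \<delta>" "v \<gamma>' = \<delta>"
  shows "\<gamma> = \<gamma>'"
proof -
  note sq = is_squareD[OF is_pushout_square[OF po]]
  have False if "\<gamma>1 < \<gamma>2" "\<gamma>2 < c" "v \<gamma>1 = \<delta>" "v \<gamma>2 = \<delta>" for \<gamma>1 \<gamma>2
  proof -
    define g where "g \<beta> = (if \<delta> < u \<beta> then 1 else (0::nat))" for \<beta>
    define h where "h \<gamma> = (if \<gamma>2 \<le> \<gamma> then 1 else (0::nat))" for \<gamma>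
    have g: "dmor b 2 g" unfolding g_def by (rule dmor_indicator[OF sq(3)]) simp
    have h: "dmor c 2 h" unfolding h_def dmor_def by auto
    have "g (p \<alpha>) = h (q \<alpha>)" if "\<alpha> < a" for \<alpha>
    proof -
      have pa: "p \<alpha> < b" and qa: "q \<alpha> < c" using that sq(1,2) by (simp_all add: dmor_less)
      have ne: "v (q \<alpha>) \<noteq> \<delta>" using miss pa sq(5)[OF that] by auto
      have "\<delta> < v (q \<alpha>) \<longleftrightarrow> \<gamma>2 \<le> q \<alpha>"
      proof
        assume "\<delta> < v (q \<alpha>)"
        then show "\<gamma>2 \<le> q \<alpha>"
          using dmor_mono[OF sq(4), of "q \<alpha>" \<gamma>2] \<open>\<gamma>2 < c\<close> \<open>v \<gamma>2 = \<delta>\<close> by fastforce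
      next
        assume "\<gamma>2 \<le> q \<alpha>"
        then show "\<delta> < v (q \<alpha>)"
          using dmor_mono[OF sq(4) _ qa] \<open>v \<gamma>2 = \<delta>\<close> ne by fastforce
      qed
      then show ?thesis using sq(5)[OF that] by (simp add: g_def h_def)
    qed
    then have "meq a (g \<circ> p) (h \<circ> q)" by (simp add: meq_def)
    then obtain w where "meq c (w \<circ> v) h"
      using pushout_universal[OF po g h] by metis
    moreover have "\<gamma>1 < c" using that by simp
    ultimately have "w \<delta> = h \<gamma>1" "w \<delta> = h \<gamma>2" using that unfolding meq_def by (metis comp_apply)+
    then show False using that by (simp add: h_def)
  qed
  then show ?thesis using assms(3-6) by (metis linorder_neqE_nat)
qed

lemma pushout_no_switch:
  assumes po: "is_pushout a b c d p q u v" and "Suc \<delta> < d"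
    and miss_u: "\<not> (\<exists>\<beta><b. u \<beta> = \<delta>)" and miss_v: "\<not> (\<exists>\<gamma><c. v \<gamma> = Suc \<delta>)"
    and "\<gamma> < c" "v \<gamma> = \<delta>" "\<beta> < b" "u \<beta> = Suc \<delta>"
  shows False
proof -
  note sq = is_squareD[OF is_pushout_square[OF po]]
  define g where "g \<beta> = (if Suc \<delta> < u \<beta> then 1 else (0::nat))" for \<beta>
  define h where "h \<gamma> = (if \<delta> \<le> v \<gamma> then 1 else (0::nat))" for \<gamma>
  have g: "dmor b 2 g" unfolding g_def by (rule dmor_indicator[OF sq(3)]) simp
  have h: "dmor c 2 h" unfolding h_def by (rule dmor_indicator[OF sq(4)]) simp
  have "g (p \<alpha>) = h (q \<alpha>)" if "\<alpha> < a" for \<alpha>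
  proof -
    have "p \<alpha> < b" "q \<alpha> < c" using that sq(1,2) by (simp_all add: dmor_less)
    then have "u (p \<alpha>) \<noteq> \<delta>" "v (q \<alpha>) \<noteq> Suc \<delta>" using miss_u miss_v by blast+
    then show ?thesis using sq(5)[OF that] by (auto simp: g_def h_def)
  qed
  then have "meq a (g \<circ> p) (h \<circ> q)" by (simp add: meq_def)
  then obtain w where w: "dmor d 2 w" "meq b (w \<circ> u) g" "meq c (w \<circ> v) h"
    using pushout_universal[OF po g h] by metis
  have "w \<delta> = 1" using w(3) assms(5,6) unfolding meq_def h_def by (metis comp_apply order_refl)
  moreover have "w (Suc \<delta>) = 0" using w(2) assms(7,8) unfolding meq_def g_def
    by (metis comp_apply less_irrefl)
  moreover have "w \<delta> \<le> w (Suc \<delta>)" using dmor_mono[OF w(1), of \<delta> "Suc \<delta>"] \<open>Suc \<delta> < d\<close> by simp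
  ultimately show False by simp
qed

text \<open>A witness that \<open>\<delta> \<le> \<delta>'\<close> holds in the order generated by the two legs.\<close>

definition square_linked :: "nat \<Rightarrow> nat \<Rightarrow> nat \<Rightarrow> (nat \<Rightarrow> nat) \<Rightarrow> (nat \<Rightarrow> nat)
    \<Rightarrow> (nat \<Rightarrow> nat) \<Rightarrow> (nat \<Rightarrow> nat) \<Rightarrow> nat \<Rightarrow> nat \<Rightarrow> bool" where
  "square_linked a b c p q u v \<delta> \<delta>' \<longleftrightarrow>
     (\<exists>\<beta><b. \<exists>\<beta>'<b. u \<beta> = \<delta> \<and> u \<beta>' = \<delta>' \<and> \<beta> \<le> \<beta>') \<or>
     (\<exists>\<gamma><c. \<exists>\<gamma>'<c. v \<gamma> = \<delta> \<and> v \<gamma>' = \<delta>' \<and> \<gamma> \<le> \<gamma>') \<or>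
     (\<exists>\<beta><b. \<exists>\<alpha><a. \<exists>\<gamma>'<c. u \<beta> = \<delta> \<and> v \<gamma>' = \<delta>' \<and> \<beta> \<le> p \<alpha> \<and> q \<alpha> \<le> \<gamma>') \<or>
     (\<exists>\<gamma><c. \<exists>\<alpha><a. \<exists>\<beta>'<b. v \<gamma> = \<delta> \<and> u \<beta>' = \<delta>' \<and> \<gamma> \<le> q \<alpha> \<and> p \<alpha> \<le> \<beta>')"

lemma square_linked_swap:
  "square_linked a c b q p v u \<delta> \<delta>' \<longleftrightarrow> square_linked a b c p q u v \<delta> \<delta>'"
  unfolding square_linked_def by blast

lemma square_linked_mono:
  assumes linked: "square_linked a b c p q u v \<delta> \<delta>'"
    and "dmor a b p" "dmor a c q" and g: "dmor b x g" and h: "dmor c x h"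
    and agree: "\<And>\<alpha>. \<alpha> < a \<Longrightarrow> g (p \<alpha>) = h (q \<alpha>)"
    and w_u: "\<And>\<beta>. \<beta> < b \<Longrightarrow> w (u \<beta>) = g \<beta>" and w_v: "\<And>\<gamma>. \<gamma> < c \<Longrightarrow> w (v \<gamma>) = h \<gamma>"
  shows "w \<delta> \<le> w \<delta>'"
  using linked unfolding square_linked_def
proof (elim disjE exE conjE)
  fix \<beta> \<beta>' assume "\<beta> < b" "\<beta>' < b" "u \<beta> = \<delta>" "u \<beta>' = \<delta>'" "\<beta> \<le> \<beta>'"
  then show ?thesis using w_u dmor_mono[OF g] by metis
next
  fix \<gamma> \<gamma>' assume "\<gamma> < c" "\<gamma>' < c" "v \<gamma> = \<delta>" "v \<gamma>' = \<delta>'" "\<gamma> \<le> \<gamma>'"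
  then show ?thesis using w_v dmor_mono[OF h] by metis
next
  fix \<beta> \<alpha> \<gamma>'
  assume A: "\<beta> < b" "\<alpha> < a" "\<gamma>' < c" "u \<beta> = \<delta>" "v \<gamma>' = \<delta>'" "\<beta> \<le> p \<alpha>" "q \<alpha> \<le> \<gamma>'"
  have "p \<alpha> < b" using assms(2) A(2) by (rule dmor_less)
  then have "g \<beta> \<le> g (p \<alpha>)" "h (q \<alpha>) \<le> h \<gamma>'" using A dmor_mono[OF g] dmor_mono[OF h] by blast+
  then show ?thesis using w_u[OF A(1)] w_v[OF A(3)] agree[OF A(2)] A(4,5) by simp
next
  fix \<gamma> \<alpha> \<beta>'
  assume A: "\<gamma> < c" "\<alpha> < a" "\<beta>' < b" "v \<gamma> = \<delta>" "u \<beta>' = \<delta>'" "\<gamma> \<le> q \<alpha>" "p \<alpha> \<le> \<beta>'"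
  have "q \<alpha> < c" using assms(3) A(2) by (rule dmor_less)
  then have "h \<gamma> \<le> h (q \<alpha>)" "g (p \<alpha>) \<le> g \<beta>'" using A dmor_mono[OF g] dmor_mono[OF h] by blast+
  then show ?thesis using w_u[OF A(3)] w_v[OF A(1)] agree[OF A(2)] A(4,5) by simp
qed

lemma glue_along_legs:
  assumes glue: "\<And>\<beta> \<gamma>. \<beta> < b \<Longrightarrow> \<gamma> < c \<Longrightarrow> u \<beta> = v \<gamma> \<Longrightarrow> \<exists>\<alpha><a. p \<alpha> = \<beta> \<and> q \<alpha> = \<gamma>"
    and inj_u: "\<And>\<beta> \<beta>'. \<not> (\<exists>\<gamma><c. v \<gamma> = u \<beta>) \<Longrightarrow> \<beta> < b \<Longrightarrow> \<beta>' < b \<Longrightarrow> u \<beta> = u \<beta>' \<Longrightarrow> \<beta> = \<beta>'"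
    and inj_v: "\<And>\<gamma> \<gamma>'. \<not> (\<exists>\<beta><b. u \<beta> = v \<gamma>) \<Longrightarrow> \<gamma> < c \<Longrightarrow> \<gamma>' < c \<Longrightarrow> v \<gamma> = v \<gamma>' \<Longrightarrow> \<gamma> = \<gamma>'"
    and agree: "\<And>\<alpha>. \<alpha> < a \<Longrightarrow> g (p \<alpha>) = h (q \<alpha>)"
  obtains w where "\<And>\<beta>. \<beta> < b \<Longrightarrow> w (u \<beta>) = g \<beta>" "\<And>\<gamma>. \<gamma> < c \<Longrightarrow> w (v \<gamma>) = h \<gamma>"
proof -
  have g_eq_h: "g \<beta> = h \<gamma>" if "\<beta> < b" "\<gamma> < c" "u \<beta> = v \<gamma>" for \<beta> \<gamma>
    using glue[OF that] agree by auto
  define w where "w \<delta> = (if \<exists>\<beta><b. u \<beta> = \<delta> then g (SOME \<beta>. \<beta> < b \<and> u \<beta> = \<delta>)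
    else h (SOME \<gamma>. \<gamma> < c \<and> v \<gamma> = \<delta>))" for \<delta>
  have w_u: "w (u \<beta>) = g \<beta>" if "\<beta> < b" for \<beta>
  proof -
    define \<beta>0 where "\<beta>0 = (SOME \<beta>'. \<beta>' < b \<and> u \<beta>' = u \<beta>)"
    have \<beta>0: "\<beta>0 < b" "u \<beta>0 = u \<beta>" unfolding \<beta>0_def by (rule someI2[of _ \<beta>]; use that in simp)+
    have "w (u \<beta>) = g \<beta>0" unfolding w_def \<beta>0_def using that by auto
    also have "g \<beta>0 = g \<beta>"
    proof (cases "\<exists>\<gamma><c. v \<gamma> = u \<beta>")
      case True
      then show ?thesis using g_eq_h \<beta>0 that by metis
    next
      case False
      then show ?thesis using inj_u[OF _ \<beta>0(1) that] \<beta>0(2) by simp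
    qed
    finally show ?thesis .
  qed
  moreover have "w (v \<gamma>) = h \<gamma>" if "\<gamma> < c" for \<gamma>
  proof (cases "\<exists>\<beta><b. u \<beta> = v \<gamma>")
    case True
    then show ?thesis using w_u g_eq_h that by metis
  next
    case False
    define \<gamma>0 where "\<gamma>0 = (SOME \<gamma>'. \<gamma>' < c \<and> v \<gamma>' = v \<gamma>)"
    have \<gamma>0: "\<gamma>0 < c" "v \<gamma>0 = v \<gamma>" unfolding \<gamma>0_def by (rule someI2[of _ \<gamma>]; use that in simp)+
    have "w (v \<gamma>) = h \<gamma>0" unfolding w_def \<gamma>0_def by (rule if_not_P[OF False])
    then show ?thesis using inj_v[OF False that \<gamma>0(1)] \<gamma>0(2) by simp
  qed
  ultimately show thesis by (rule that)
qed

lemma pushoutI: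
  assumes sq: "is_square a b c d p q u v"
    and glue: "\<And>\<beta> \<gamma>. \<beta> < b \<Longrightarrow> \<gamma> < c \<Longrightarrow> u \<beta> = v \<gamma> \<Longrightarrow> \<exists>\<alpha><a. p \<alpha> = \<beta> \<and> q \<alpha> = \<gamma>"
    and surj: "\<And>\<delta>. \<delta> < d \<Longrightarrow> (\<exists>\<beta><b. u \<beta> = \<delta>) \<or> (\<exists>\<gamma><c. v \<gamma> = \<delta>)"
    and inj_u: "\<And>\<beta> \<beta>'. \<not> (\<exists>\<gamma><c. v \<gamma> = u \<beta>) \<Longrightarrow> \<beta> < b \<Longrightarrow> \<beta>' < b \<Longrightarrow> u \<beta> = u \<beta>' \<Longrightarrow> \<beta> = \<beta>'"
    and inj_v: "\<And>\<gamma> \<gamma>'. \<not> (\<exists>\<beta><b. u \<beta> = v \<gamma>) \<Longrightarrow> \<gamma> < c \<Longrightarrow> \<gamma>' < c \<Longrightarrow> v \<gamma> = v \<gamma>' \<Longrightarrow> \<gamma> = \<gamma>'"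
    and linked: "\<And>\<delta> \<delta>'. \<delta> < \<delta>' \<Longrightarrow> \<delta>' < d \<Longrightarrow> square_linked a b c p q u v \<delta> \<delta>'"
  shows "is_pushout a b c d p q u v"
  unfolding is_pushout_def
proof (intro conjI sq allI impI)
  note sqd = is_squareD[OF sq]
  fix x g h assume "dmor b x g \<and> dmor c x h \<and> meq a (g \<circ> p) (h \<circ> q)"
  then have g: "dmor b x g" and h: "dmor c x h" and agree: "\<And>\<alpha>. \<alpha> < a \<Longrightarrow> g (p \<alpha>) = h (q \<alpha>)"
    by (auto simp: meq_def)
  obtain w where w_u: "\<And>\<beta>. \<beta> < b \<Longrightarrow> w (u \<beta>) = g \<beta>" and w_v: "\<And>\<gamma>. \<gamma> < c \<Longrightarrow> w (v \<gamma>) = h \<gamma>"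
    using glue_along_legs[of b c u v a p q g h, OF glue inj_u inj_v agree] by blast
  have "w \<delta> < x" if "\<delta> < d" for \<delta>
    using surj[OF that] w_u w_v dmor_less[OF g] dmor_less[OF h] by auto
  moreover have "w \<delta> \<le> w \<delta>'" if "\<delta> < \<delta>'" "\<delta>' < d" for \<delta> \<delta>'
    using square_linked_mono[OF linked[OF that] sqd(1,2) g h agree w_u w_v] .
  ultimately have "dmor d x w" by (auto simp: dmor_def le_less)
  moreover have "meq b (w \<circ> u) g" "meq c (w \<circ> v) h"
    using w_u w_v by (simp_all add: meq_def)
  moreover have "meq d w' w" if "meq b (w' \<circ> u) g" "meq c (w' \<circ> v) h" for w'
    using surj that w_u w_v unfolding meq_def by (metis comp_apply)
  ultimately show "\<exists>w. dmor d x w \<and> meq b (w \<circ> u) g \<and> meq c (w \<circ> v) h \<and>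
           (\<forall>w'. dmor d x w' \<and> meq b (w' \<circ> u) g \<and> meq c (w' \<circ> v) h \<longrightarrow> meq d w' w)"
    by blast
qed

section \<open>Fibres and compatibility\<close>

lemma finite_fiber: "finite (fiber I f s i)"
  by (simp add: fiber_def)

lemma fiber_eq_empty_iff: "fiber I f s i = {} \<longleftrightarrow> i \<notin> f s ` {..<I s}"
  by (auto simp: fiber_def)

lemma card_fiber_le_1_eq:
  "card (fiber I f s i) \<le> 1 \<Longrightarrow> j \<in> fiber I f s i \<Longrightarrow> j' \<in> fiber I f s i \<Longrightarrow> j = j'"
  by (metis One_nat_def card_le_Suc0_iff_eq finite_fiber)

lemma card_fiber_gt_1_obtain:
  assumes "1 < card (fiber I f s i)"
  obtains j j' where "j \<in> fiber I f s i" "j' \<in> fiber I f s i" "j < j'"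
  using assms card_le_Suc0_iff_eq[OF finite_fiber] by (metis linorder_neqE_nat not_le One_nat_def)

lemma compatible_imp_backwards_compatible:
  "compatible S I N f \<Longrightarrow> backwards_compatible S I N f"
  unfolding compatible_def backwards_compatible_def by fastforce

lemma compatible_card_fiber:
  "compatible S I N f \<Longrightarrow> i < N \<Longrightarrow> s \<in> S \<Longrightarrow> s' \<in> S \<Longrightarrow> s \<noteq> s' \<Longrightarrow>
    card (fiber I f s i) = 1 \<or> card (fiber I f s' i) = 1"
  unfolding compatible_def by blast

lemma compatible_adjacent:
  assumes "compatible S I N f" "0 < j" "j < N" "t \<in> S" "t' \<in> S"
    and "fiber I f t (j - 1) = {} \<or> fiber I f t j = {}"
    and "fiber I f t' (j - 1) = {} \<or> fiber I f t' j = {}"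
  shows "t = t'"
  using assms unfolding compatible_def fiber_eq_empty_iff by blast

text \<open>Otherwise (BC2) would force \<open>f\<^sub>s\<^sub>'\<close> to miss every value from \<open>i\<close> up to
  \<open>i' - 1\<close>, and its miss there clashes with the miss of \<open>f\<^sub>s\<close> at \<open>i'\<close>.\<close>

lemma compatible_common_value_between:
  assumes comp: "compatible S I N f" and "A \<subseteq> S" "s \<in> A" "s' \<in> A" "s \<noteq> s'"
    and "i < i'" "i' < N" and miss_s': "fiber I f s' i = {}" and miss_s: "fiber I f s i' = {}"
  shows "\<exists>m. i < m \<and> m < i' \<and> (\<forall>t\<in>A. fiber I f t m \<noteq> {})"
proof (rule ccontr)
  assume "\<not> ?thesis"
  then have gap: "\<exists>t\<in>A. fiber I f t m = {}" if "i < m" "m < i'" for m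
    using that by blast
  have "fiber I f s' (i + k) = {}" if "i + k < i'" for k
    using that
  proof (induction k)
    case (Suc k)
    obtain t where "t \<in> A" "fiber I f t (i + Suc k) = {}" using gap[of "i + Suc k"] Suc.prems
      by auto
    moreover have "t = s'"
      by (rule compatible_adjacent[OF comp, of "i + Suc k"])
        (use Suc assms(2,4) calculation \<open>i' < N\<close> in auto)
    ultimately show ?case by simp
  qed (use miss_s' in simp)
  from this[of "i' - 1 - i"] have "fiber I f s' (i' - 1) = {}" using \<open>i < i'\<close> by simp
  then have "s' = s"
    using compatible_adjacent[OF comp, of i' s' s] assms(2-4,6,7) miss_s by auto
  then show False using \<open>s \<noteq> s'\<close> by simp
qed

section \<open>Fibre products over the base\<close>

definition cech_proj :: "'a set \<Rightarrow> nat \<times> ('a \<Rightarrow> nat) \<Rightarrow> nat \<times> ('a \<Rightarrow> nat)" where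
  "cech_proj T p = (fst p, restrict (snd p) T)"

lemma mem_cech_obj:
  "p \<in> cech_obj I N f T \<longleftrightarrow> fst p < N \<and> snd p \<in> (\<Pi>\<^sub>E t\<in>T. fiber I f t (fst p))"
  by (cases p) (simp add: cech_obj_def)

lemma finite_cech_obj:
  assumes "finite T"
  shows "finite (cech_obj I N f T)"
proof (rule finite_subset)
  have "(\<Pi>\<^sub>E t\<in>T. fiber I f t i) \<subseteq> (\<Pi>\<^sub>E t\<in>T. {..<I t})" for i
    by (rule PiE_mono) (auto simp: fiber_def)
  then show "cech_obj I N f T \<subseteq> {..<N} \<times> (\<Pi>\<^sub>E t\<in>T. {..<I t})"
    by (auto simp: cech_obj_def)
  show "finite ({..<N} \<times> (\<Pi>\<^sub>E t\<in>T. {..<I t}))"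
    using assms by (intro finite_cartesian_product finite_PiE) auto
qed

lemma cech_proj_in: "T \<subseteq> T' \<Longrightarrow> p \<in> cech_obj I N f T' \<Longrightarrow> cech_proj T p \<in> cech_obj I N f T"
  by (auto simp: mem_cech_obj cech_proj_def restrict_PiE_iff)

lemma cech_proj_id: "p \<in> cech_obj I N f T \<Longrightarrow> cech_proj T p = p"
  by (cases p) (auto simp: mem_cech_obj cech_proj_def)

lemma cech_proj_proj: "T \<subseteq> T' \<Longrightarrow> cech_proj T (cech_proj T' p) = cech_proj T p"
  by (auto simp: cech_proj_def Int_absorb1)

lemma cech_le_refl: "cech_le T p p"
  by (simp add: cech_le_def)

lemma cech_le_trans: "cech_le T p q \<Longrightarrow> cech_le T q r \<Longrightarrow> cech_le T p r"
  unfolding cech_le_def by (auto intro: order_trans)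

lemma cech_le_antisym:
  assumes "p \<in> cech_obj I N f T" "q \<in> cech_obj I N f T" "cech_le T p q" "cech_le T q p"
  shows "p = q"
proof -
  have "fst p = fst q" using assms(3,4) by (auto simp: cech_le_def)
  moreover have "snd p = snd q"
  proof (rule PiE_ext)
    show "snd p \<in> (\<Pi>\<^sub>E t\<in>T. fiber I f t (fst p))" "snd q \<in> (\<Pi>\<^sub>E t\<in>T. fiber I f t (fst p))"
      using assms(1,2) \<open>fst p = fst q\<close> by (simp_all add: mem_cech_obj)
    show "snd p t = snd q t" if "t \<in> T" for t
      using assms(3,4) \<open>fst p = fst q\<close> that by (auto simp: cech_le_def intro: antisym)
  qed
  ultimately show ?thesis by (simp add: prod_eq_iff)
qed

lemma cech_le_proj: "T \<subseteq> T' \<Longrightarrow> cech_le T' p q \<Longrightarrow> cech_le T (cech_proj T p) (cech_proj T q)"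
  by (auto simp: cech_le_def cech_proj_def)

lemma cech_le_union:
  "cech_le B (cech_proj B p) (cech_proj B q) \<Longrightarrow> cech_le C (cech_proj C p) (cech_proj C q) \<Longrightarrow>
    cech_le (B \<union> C) p q"
  by (auto simp: cech_le_def cech_proj_def)

lemma cech_obj_glue:
  assumes "p \<in> cech_obj I N f B" "q \<in> cech_obj I N f C"
    and "cech_proj (B \<inter> C) p = cech_proj (B \<inter> C) q"
  shows "\<exists>r\<in>cech_obj I N f (B \<union> C). cech_proj B r = p \<and> cech_proj C r = q"
proof
  define g where "g t = (if t \<in> B then snd p t else snd q t)" for t
  define r where "r = (fst p, restrict g (B \<union> C))"
  have "fst p = fst q" and agree: "\<And>t. t \<in> B \<Longrightarrow> t \<in> C \<Longrightarrow> snd p t = snd q t"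
    using assms(3) by (auto simp: cech_proj_def fun_eq_iff split: if_splits)
  then show "r \<in> cech_obj I N f (B \<union> C)"
    using assms(1,2) by (auto simp: r_def g_def mem_cech_obj)
  have "cech_proj B r = cech_proj B p"
    by (auto simp: r_def cech_proj_def g_def Int_absorb1 intro: restrict_ext)
  moreover have "cech_proj C r = cech_proj C q"
    using \<open>fst p = fst q\<close> agree
      by (auto simp: r_def cech_proj_def g_def Int_absorb1 intro: restrict_ext)
  ultimately show "cech_proj B r = p \<and> cech_proj C r = q"
    using assms(1,2) by (simp add: cech_proj_id)
qed

lemma cech_obj_eqI:
  assumes "p \<in> cech_obj I N f (B \<union> C)" "q \<in> cech_obj I N f (B \<union> C)"
    and "cech_proj B p = cech_proj B q" "cech_proj C p = cech_proj C q"
  shows "p = q"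
proof (rule cech_le_antisym[OF assms(1,2)])
  show "cech_le (B \<union> C) p q" "cech_le (B \<union> C) q p"
    by (rule cech_le_union; simp add: assms cech_le_refl)+
qed

text \<open>Over a fixed \<open>i\<close>, backwards compatibility leaves at most one coordinate with a
  choice.\<close>

lemma cech_le_total:
  assumes bc: "backwards_compatible S I N f" and "T \<subseteq> S"
    and p: "p \<in> cech_obj I N f T" and q: "q \<in> cech_obj I N f T"
  shows "cech_le T p q \<or> cech_le T q p"
proof (cases "fst p = fst q")
  case True
  define i where "i = fst p"
  have fib: "snd p t \<in> fiber I f t i" "snd q t \<in> fiber I f t i" if "t \<in> T" for t
    using p q True that by (auto simp: mem_cech_obj i_def)
  have "i < N" using p by (simp add: mem_cech_obj i_def)
  obtain t0 where single: "\<And>t. t \<in> T \<Longrightarrow> t \<noteq> t0 \<Longrightarrow> card (fiber I f t i) \<le> 1"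
  proof (cases "\<exists>t0\<in>T. 1 < card (fiber I f t0 i)")
    case True
    then obtain t0 where t0: "t0 \<in> T" "1 < card (fiber I f t0 i)" by blast
    have "card (fiber I f t i) \<le> 1" if "t \<in> T" "t \<noteq> t0" for t
    proof -
      have "t \<in> S" "t0 \<in> S" using that t0 \<open>T \<subseteq> S\<close> by auto
      then show ?thesis
        using bc[unfolded backwards_compatible_def, rule_format, OF \<open>i < N\<close>] that(2) t0(2)
        by (meson not_le)
    qed
    then show thesis by (rule that)
  next
    case False
    then show thesis by (intro that[of undefined]) (simp add: not_less)
  qed
  then have eq: "snd p t = snd q t" if "t \<in> T" "t \<noteq> t0" for t
    using card_fiber_le_1_eq[OF single fib(1) fib(2)] that by simp
  consider "snd p t0 \<le> snd q t0" | "snd q t0 \<le> snd p t0" by linarith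
  then show ?thesis
  proof cases
    case 1
    then have "\<forall>t\<in>T. snd p t \<le> snd q t" using eq by (metis order_refl)
    then show ?thesis using True by (simp add: cech_le_def)
  next
    case 2
    then have "\<forall>t\<in>T. snd q t \<le> snd p t" using eq by (metis order_refl)
    then show ?thesis using True by (simp add: cech_le_def)
  qed
qed (auto simp: cech_le_def)

lemma cech_obj_incomparable:
  assumes "i < N" "s \<noteq> s'" "1 < card (fiber I f s i)" "1 < card (fiber I f s' i)"
  obtains p q where "p \<in> cech_obj I N f {s, s'}" "q \<in> cech_obj I N f {s, s'}"
    "\<not> cech_le {s, s'} p q" "\<not> cech_le {s, s'} q p"
proof -
  obtain j j' where j: "j \<in> fiber I f s i" "j' \<in> fiber I f s i" "j < j'"
    using assms(3) by (rule card_fiber_gt_1_obtain)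
  obtain k k' where k: "k \<in> fiber I f s' i" "k' \<in> fiber I f s' i" "k < k'"
    using assms(4) by (rule card_fiber_gt_1_obtain)
  define p where "p = (i, restrict (\<lambda>t. if t = s then j else k') {s, s'})"
  define q where "q = (i, restrict (\<lambda>t. if t = s then j' else k) {s, s'})"
  show thesis
  proof (rule that)
    show "p \<in> cech_obj I N f {s, s'}" "q \<in> cech_obj I N f {s, s'}"
      using assms(1) j k by (auto simp: p_def q_def mem_cech_obj)
    show "\<not> cech_le {s, s'} p q" "\<not> cech_le {s, s'} q p"
      using assms(2) j(3) k(3) by (auto simp: p_def q_def cech_le_def)
  qed
qed

lemma bij_betw_cech_obj_empty: "bij_betw (\<lambda>i. (i, \<lambda>_. undefined)) {..<N} (cech_obj I N f {})"
  by (rule bij_betw_imageI) (auto simp: inj_on_def cech_obj_def)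

lemma bij_betw_cech_obj_singleton:
  assumes "dmor (I s) N (f s)"
  shows "bij_betw (\<lambda>j. (f s j, restrict (\<lambda>_. j) {s})) {..<I s} (cech_obj I N f {s})"
proof (rule bij_betw_imageI)
  show "inj_on (\<lambda>j. (f s j, restrict (\<lambda>_. j) {s})) {..<I s}"
    by (auto simp: inj_on_def fun_eq_iff)
  show "(\<lambda>j. (f s j, restrict (\<lambda>_. j) {s})) ` {..<I s} = cech_obj I N f {s}"
  proof (intro equalityI subsetI)
    fix p assume "p \<in> cech_obj I N f {s}"
    then have "snd p s < I s" "p = (f s (snd p s), restrict (\<lambda>_. snd p s) {s})"
      by (auto simp: mem_cech_obj fiber_def prod_eq_iff fun_eq_iff PiE_iff extensional_def)
    then show "p \<in> (\<lambda>j. (f s j, restrict (\<lambda>_. j) {s})) ` {..<I s}"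
      by blast
  next
    fix p assume "p \<in> (\<lambda>j. (f s j, restrict (\<lambda>_. j) {s})) ` {..<I s}"
    then obtain j where j: "j < I s" and p: "p = (f s j, restrict (\<lambda>_. j) {s})" by blast
    have "f s j < N" using assms j by (rule dmor_less)
    moreover have "restrict (\<lambda>_. j) {s} \<in> (\<Pi>\<^sub>E t\<in>{s}. fiber I f t (f s j))"
      using j by (simp only: restrict_PiE_iff) (simp add: fiber_def)
    ultimately show "p \<in> cech_obj I N f {s}" by (simp add: p cech_obj_def)
  qed
qed

lemma cech_le_singleton:
  assumes "dmor (I s) N (f s)" "j < I s" "j' < I s"
  shows "cech_le {s} (f s j, restrict (\<lambda>_. j) {s}) (f s j', restrict (\<lambda>_. j') {s}) \<longleftrightarrow> j \<le> j'"
proof -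
  have "f s j < f s j' \<Longrightarrow> j < j'" using dmor_less_imp_less[OF assms] .
  moreover have "j \<le> j' \<Longrightarrow> f s j \<le> f s j'" using dmor_mono[OF assms(1) _ assms(3)] .
  ultimately show ?thesis by (auto simp: cech_le_def)
qed

section \<open>Ranks in a finite linear order\<close>

definition linorder_on :: "'b set \<Rightarrow> ('b \<Rightarrow> 'b \<Rightarrow> bool) \<Rightarrow> bool" where
  "linorder_on X le \<longleftrightarrow> (\<forall>x\<in>X. \<forall>y\<in>X. le x y \<or> le y x) \<and>
     (\<forall>x\<in>X. \<forall>y\<in>X. le x y \<longrightarrow> le y x \<longrightarrow> x = y) \<and>
     (\<forall>x\<in>X. \<forall>y\<in>X. \<forall>z\<in>X. le x y \<longrightarrow> le y z \<longrightarrow> le x z)"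

definition order_rank :: "'b set \<Rightarrow> ('b \<Rightarrow> 'b \<Rightarrow> bool) \<Rightarrow> 'b \<Rightarrow> nat" where
  "order_rank X le x = card {y\<in>X. le y x \<and> y \<noteq> x}"

lemma order_rank_less:
  assumes fin: "finite X" and lin: "linorder_on X le"
    and "x \<in> X" "y \<in> X" "le x y" "x \<noteq> y"
  shows "order_rank X le x < order_rank X le y"
  unfolding order_rank_def
proof (rule psubset_card_mono)
  show "finite {z \<in> X. le z y \<and> z \<noteq> y}" using fin by simp
  have "le z y" if "z \<in> X" "le z x" for z
    using lin that assms(3-5) unfolding linorder_on_def by blast
  moreover have "\<not> le y x" using lin assms(3-6) unfolding linorder_on_def by blast
  ultimately show "{z \<in> X. le z x \<and> z \<noteq> x} \<subset> {z \<in> X. le z y \<and> z \<noteq> y}"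
    using assms(3,5,6) by blast
qed

lemma order_rank_le_iff:
  assumes fin: "finite X" and lin: "linorder_on X le" and "x \<in> X" "y \<in> X"
  shows "le x y \<longleftrightarrow> order_rank X le x \<le> order_rank X le y"
proof
  assume "le x y"
  then show "order_rank X le x \<le> order_rank X le y"
    using order_rank_less[OF fin lin assms(3,4)] by (cases "x = y") auto
next
  assume "order_rank X le x \<le> order_rank X le y"
  moreover have "le y x \<and> y \<noteq> x" if "\<not> le x y"
    using that lin assms(3,4) unfolding linorder_on_def by blast
  ultimately show "le x y" using order_rank_less[OF fin lin assms(4,3)] by fastforce
qed

lemma bij_betw_order_rank:
  assumes fin: "finite X" and lin: "linorder_on X le"
  shows "bij_betw (order_rank X le) X {..<card X}"
proof -
  have inj: "inj_on (order_rank X le) X"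
  proof (rule inj_onI)
    fix x y assume "x \<in> X" "y \<in> X" "order_rank X le x = order_rank X le y"
    then have "le x y" "le y x" using order_rank_le_iff[OF fin lin] by simp_all
    then show "x = y" using lin \<open>x \<in> X\<close> \<open>y \<in> X\<close> unfolding linorder_on_def by blast
  qed
  have "order_rank X le x < card X" if "x \<in> X" for x
    unfolding order_rank_def by (rule psubset_card_mono[OF fin]) (use that in blast)
  then have "order_rank X le ` X \<subseteq> {..<card X}" by blast
  moreover have "card (order_rank X le ` X) = card {..<card X}" using card_image[OF inj] by simp
  ultimately show ?thesis
    unfolding bij_betw_def using inj card_subset_eq[OF finite_lessThan] by blast
qed

lemma order_rank_iso:
  assumes e: "bij_betw e {..<n} X"
    and iso: "\<And>j j'. j < n \<Longrightarrow> j' < n \<Longrightarrow> le (e j) (e j') \<longleftrightarrow> j \<le> j'" and "j < n"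
  shows "order_rank X le (e j) = j"
proof -
  have inj: "inj_on e {..<n}" and X: "X = e ` {..<n}" using e by (auto simp: bij_betw_def)
  have "{y \<in> X. le y (e j) \<and> y \<noteq> e j} = e ` {..<j}"
  proof (intro equalityI subsetI)
    fix y assume "y \<in> {y \<in> X. le y (e j) \<and> y \<noteq> e j}"
    then obtain j' where "j' < n" "y = e j'" "j' \<le> j" "j' \<noteq> j"
      using X iso \<open>j < n\<close> by auto
    then show "y \<in> e ` {..<j}" by auto
  next
    fix y assume "y \<in> e ` {..<j}"
    then obtain j' where "j' < j" "y = e j'" by auto
    then show "y \<in> {y \<in> X. le y (e j) \<and> y \<noteq> e j}"
      using X iso[of j' j] inj \<open>j < n\<close> by (auto simp: inj_on_def)
  qed
  moreover have "inj_on e {..<j}" using inj_on_subset[OF inj] \<open>j < n\<close> by auto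
  ultimately show ?thesis unfolding order_rank_def by (simp add: card_image)
qed

section \<open>Cech cubes are fibre products\<close>

lemma empty_singleton_or_pair_cases:
  obtains "T = {}" | s where "T = {s}" | s s' where "s \<in> T" "s' \<in> T" "s \<noteq> s'"
  by blast

locale cech_cube =
  fixes S :: "'a set" and I :: "'a \<Rightarrow> nat" and N :: nat and f :: "'a \<Rightarrow> nat \<Rightarrow> nat"
    and Q :: "'a set \<Rightarrow> nat" and M :: "'a set \<Rightarrow> 'a set \<Rightarrow> nat \<Rightarrow> nat"
  assumes finite_S: "finite S" and cech: "is_cech_cube S I N f Q M"
begin

lemma M_dmor: "T \<subseteq> T' \<Longrightarrow> T' \<subseteq> S \<Longrightarrow> dmor (Q T') (Q T) (M T T')"
  using cech by (simp add: is_cech_cube_def is_cube_def)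

lemma M_less: "T \<subseteq> T' \<Longrightarrow> T' \<subseteq> S \<Longrightarrow> k < Q T' \<Longrightarrow> M T T' k < Q T"
  by (rule dmor_less[OF M_dmor])

lemma M_mono: "T \<subseteq> T' \<Longrightarrow> T' \<subseteq> S \<Longrightarrow> k \<le> k' \<Longrightarrow> k' < Q T' \<Longrightarrow> M T T' k \<le> M T T' k'"
  by (rule dmor_mono[OF M_dmor])

lemma M_id: "T \<subseteq> S \<Longrightarrow> k < Q T \<Longrightarrow> M T T k = k"
  using cech by (simp add: is_cech_cube_def is_cube_def meq_def)

lemma M_comp:
  "T \<subseteq> T' \<Longrightarrow> T' \<subseteq> T'' \<Longrightarrow> T'' \<subseteq> S \<Longrightarrow> k < Q T'' \<Longrightarrow> M T T' (M T' T'' k) = M T T'' k"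
  using cech unfolding is_cech_cube_def is_cube_def meq_def by (metis comp_apply)

lemma Q_empty: "Q {} = N"
  using cech by (simp add: is_cech_cube_def)

lemma Q_singleton: "s \<in> S \<Longrightarrow> Q {s} = I s"
  using cech by (simp add: is_cech_cube_def)

lemma M_empty_singleton: "s \<in> S \<Longrightarrow> k < I s \<Longrightarrow> M {} {s} k = f s k"
  using cech by (simp add: is_cech_cube_def meq_def)

lemma M_empty_less: "T \<subseteq> S \<Longrightarrow> k < Q T \<Longrightarrow> M {} T k < N"
  using M_less[of "{}" T k] Q_empty by simp

lemma M_empty_reflects_less:
  assumes "T \<subseteq> S" "k < Q T" "k' < Q T" "M {} T k < M {} T k'"
  shows "k < k'"
  using dmor_less_imp_less[OF M_dmor[of "{}" T]] assms by simp

lemma dmor_claw: "s \<in> S \<Longrightarrow> dmor (I s) N (f s)"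
  using M_dmor[of "{}" "{s}"] M_empty_singleton Q_empty Q_singleton by (simp add: dmor_def)

lemma pullback_square:
  assumes "T \<subseteq> S" "s \<in> S" "s' \<in> S" "s \<noteq> s'" "s \<notin> T" "s' \<notin> T"
  shows "is_pullback (Q (T \<union> {s, s'})) (Q (T \<union> {s})) (Q (T \<union> {s'})) (Q T)
    (M (T \<union> {s}) (T \<union> {s, s'})) (M (T \<union> {s'}) (T \<union> {s, s'}))
    (M T (T \<union> {s})) (M T (T \<union> {s'}))"
  using cech assms unfolding is_cech_cube_def strongly_cartesian_def by blast

lemma pullback_remove_pair:
  assumes "T \<subseteq> S" "s \<in> T" "s' \<in> T" "s \<noteq> s'"
  shows "is_pullback (Q T) (Q (T - {s'})) (Q (T - {s})) (Q (T - {s, s'}))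
    (M (T - {s'}) T) (M (T - {s}) T) (M (T - {s, s'}) (T - {s'})) (M (T - {s, s'}) (T - {s}))"
proof -
  have "T - {s, s'} \<union> {s, s'} = T" "T - {s, s'} \<union> {s} = T - {s'}" "T - {s, s'} \<union> {s'} = T - {s}"
    using assms(2-4) by auto
  then show ?thesis using pullback_square[of "T - {s, s'}" s s'] assms by auto
qed

definition point :: "'a set \<Rightarrow> nat \<Rightarrow> nat \<times> ('a \<Rightarrow> nat)" where
  "point T k = (M {} T k, restrict (\<lambda>t. M {t} T k) T)"

lemma point_in:
  assumes "T \<subseteq> S" "k < Q T"
  shows "point T k \<in> cech_obj I N f T"
proof -
  have "M {t} T k \<in> fiber I f t (M {} T k)" if "t \<in> T" for t
  proof -
    have "t \<in> S" "{t} \<subseteq> T" using assms(1) that by auto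
    then have "M {t} T k < I t" using M_less[of "{t}" T k] assms Q_singleton by simp
    moreover have "f t (M {t} T k) = M {} T k"
      using M_empty_singleton[OF \<open>t \<in> S\<close> calculation] M_comp[of "{}" "{t}" T k] assms \<open>{t} \<subseteq> T\<close>
        by simp
    ultimately show ?thesis by (simp add: fiber_def)
  qed
  then show ?thesis using M_empty_less[OF assms] by (simp add: point_def cech_obj_def)
qed

lemma point_natural:
  assumes "T \<subseteq> T'" "T' \<subseteq> S" "k < Q T'"
  shows "point T (M T T' k) = cech_proj T (point T' k)"
proof -
  have "M U T (M T T' k) = M U T' k" if "U \<subseteq> T" for U
    using M_comp[OF that assms] .
  moreover have "T' \<inter> T = T" using assms(1) by blast
  ultimately show ?thesis
    by (auto simp: point_def cech_proj_def intro!: restrict_ext)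
qed

lemma point_mono:
  assumes "T \<subseteq> S" "k \<le> k'" "k' < Q T"
  shows "cech_le T (point T k) (point T k')"
proof -
  have "M {} T k \<le> M {} T k'" using M_mono assms by simp
  moreover have "\<forall>t\<in>T. M {t} T k \<le> M {t} T k'" using M_mono[of "{_}" T k k'] assms by auto
  ultimately show ?thesis unfolding point_def cech_le_def by (simp add: le_less)
qed

lemma point_empty: "k < N \<Longrightarrow> point {} k = (k, \<lambda>_. undefined)"
  by (simp add: point_def M_id Q_empty restrict_def)

lemma point_singleton: "s \<in> S \<Longrightarrow> k < I s \<Longrightarrow> point {s} k = (f s k, restrict (\<lambda>_. k) {s})"
  by (auto simp: point_def M_id Q_singleton M_empty_singleton intro!: restrict_ext)

lemma finite_subset_S: "T \<subseteq> S \<Longrightarrow> finite T"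
  by (rule finite_subset[OF _ finite_S])

text \<open>Both halves of the bijectivity of \<open>point T\<close> go by induction along the pullback
  square that removes two coordinates \<open>s \<noteq> s'\<close> of \<open>T\<close>.\<close>

lemma inj_on_point:
  assumes "T \<subseteq> S"
  shows "inj_on (point T) {..<Q T}"
  using finite_subset_S[OF assms] assms
proof (induction T rule: finite_psubset_induct)
  case (psubset T)
  show ?case
  proof (cases T rule: empty_singleton_or_pair_cases)
    case 1
    then show ?thesis by (auto simp: inj_on_def point_empty Q_empty)
  next
    case (2 s)
    then show ?thesis using psubset.prems by (auto simp: inj_on_def point_def M_id fun_eq_iff)
  next
    case (3 s s')
    define B C where "B = T - {s'}" and "C = T - {s}"
    have sub: "B \<subset> T" "C \<subset> T" "B \<subseteq> S" "C \<subseteq> S" "B \<subseteq> T" "C \<subseteq> T"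
      using 3 psubset.prems by (auto simp: B_def C_def)
    note pb = pullback_remove_pair[OF psubset.prems 3, folded B_def C_def]
    show ?thesis
    proof (rule inj_onI)
      fix k k' assume k: "k \<in> {..<Q T}" "k' \<in> {..<Q T}" and eq: "point T k = point T k'"
      have "M B T k = M B T k'"
        using inj_onD[OF psubset.IH[OF sub(1,3)]] point_natural[OF sub(5) psubset.prems] eq k
          M_less[OF sub(5) psubset.prems]
        by simp
      moreover have "M C T k = M C T k'"
        using inj_onD[OF psubset.IH[OF sub(2,4)]] point_natural[OF sub(6) psubset.prems] eq k
          M_less[OF sub(6) psubset.prems]
        by simp
      ultimately show "k = k'" using pullback_jointly_inj[OF pb] k by simp
    qed
  qed
qed

lemma point_surj_pair:
  assumes T: "T \<subseteq> S" and s: "s \<in> T" "s' \<in> T" "s \<noteq> s'"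
    and surj_B: "cech_obj I N f (T - {s'}) \<subseteq> point (T - {s'}) ` {..<Q (T - {s'})}"
    and surj_C: "cech_obj I N f (T - {s}) \<subseteq> point (T - {s}) ` {..<Q (T - {s})}"
  shows "cech_obj I N f T \<subseteq> point T ` {..<Q T}"
proof
  define B C T0 where "B = T - {s'}" and "C = T - {s}" and "T0 = T - {s, s'}"
  have sub: "B \<subseteq> S" "C \<subseteq> S" "T0 \<subseteq> S" "B \<subseteq> T" "C \<subseteq> T" "T0 \<subseteq> B" "T0 \<subseteq> C" "B \<union> C = T"
    using s T by (auto simp: B_def C_def T0_def)
  note pb = pullback_remove_pair[OF T s, folded B_def C_def T0_def]
  fix p assume p: "p \<in> cech_obj I N f T"
  obtain kb where kb: "kb < Q B" "point B kb = cech_proj B p"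
    using surj_B cech_proj_in[OF sub(4) p] by (auto simp: B_def)
  obtain kc where kc: "kc < Q C" "point C kc = cech_proj C p"
    using surj_C cech_proj_in[OF sub(5) p] by (auto simp: C_def)
  have "point T0 (M T0 B kb) = point T0 (M T0 C kc)"
    using point_natural[OF sub(6,1) kb(1)] point_natural[OF sub(7,2) kc(1)] kb kc
      cech_proj_proj[OF sub(6)] cech_proj_proj[OF sub(7)] by simp
  then have "M T0 B kb = M T0 C kc"
    using inj_on_point[OF sub(3)] M_less[OF sub(6,1) kb(1)] M_less[OF sub(7,2) kc(1)]
    by (auto dest: inj_onD)
  then obtain k where k: "k < Q T" "M B T k = kb" "M C T k = kc"
    using pullback_jointly_surj[OF pb kb(1) kc(1)] by blast
  have "point T k = p"
  proof (rule cech_obj_eqI[where B = B and C = C, unfolded sub(8)])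
    show "point T k \<in> cech_obj I N f T" using point_in[OF T k(1)] .
    show "p \<in> cech_obj I N f T" by (rule p)
    show "cech_proj B (point T k) = cech_proj B p" "cech_proj C (point T k) = cech_proj C p"
      using point_natural[OF sub(4) T k(1)] point_natural[OF sub(5) T k(1)] k kb kc by simp_all
  qed
  then show "p \<in> point T ` {..<Q T}" using k(1) by blast
qed

lemma point_surj:
  assumes "T \<subseteq> S"
  shows "cech_obj I N f T \<subseteq> point T ` {..<Q T}"
  using finite_subset_S[OF assms] assms
proof (induction T rule: finite_psubset_induct)
  case (psubset T)
  show ?case
  proof (cases T rule: empty_singleton_or_pair_cases)
    case 1
    then show ?thesis by (auto simp: cech_obj_def point_empty Q_empty)
  next
    case (2 s)
    then have "s \<in> S" using psubset.prems by simp
    have "point {s} ` {..<Q {s}} = (\<lambda>j. (f s j, restrict (\<lambda>_. j) {s})) ` {..<I s}"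
      using \<open>s \<in> S\<close> by (simp add: Q_singleton point_singleton)
    also have "\<dots> = cech_obj I N f {s}"
      using bij_betw_cech_obj_singleton[of I s N f, OF dmor_claw[OF \<open>s \<in> S\<close>]]
        by (simp add: bij_betw_def)
    finally show ?thesis unfolding 2 by simp
  next
    case (3 s s')
    then have "T - {s'} \<subset> T" "T - {s} \<subset> T" "T - {s'} \<subseteq> S" "T - {s} \<subseteq> S"
      using psubset.prems by auto
    then show ?thesis
      using point_surj_pair[OF psubset.prems 3] psubset.IH by blast
  qed
qed

lemma bij_betw_point:
  assumes "T \<subseteq> S"
  shows "bij_betw (point T) {..<Q T} (cech_obj I N f T)"
proof (rule bij_betw_imageI)
  show "inj_on (point T) {..<Q T}" using assms by (rule inj_on_point)
  show "point T ` {..<Q T} = cech_obj I N f T"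
    using point_surj[OF assms] point_in[OF assms] by blast
qed

lemma point_le_iff:
  assumes "T \<subseteq> S" "k < Q T" "k' < Q T"
  shows "cech_le T (point T k) (point T k') \<longleftrightarrow> k \<le> k'"
proof
  assume le: "cech_le T (point T k) (point T k')"
  show "k \<le> k'"
  proof (rule ccontr)
    assume "\<not> k \<le> k'"
    then have "cech_le T (point T k') (point T k)" using point_mono assms by simp
    then have "point T k = point T k'" using cech_le_antisym point_in assms le by blast
    then show False using inj_on_point[OF assms(1)] assms \<open>\<not> k \<le> k'\<close> by (auto dest: inj_onD)
  qed
qed (use point_mono assms in simp)

lemma cech_formula: "cech_formula S I N f Q M"
  unfolding cech_formula_def
proof (intro exI[of _ point] conjI allI impI)
  fix T assume "T \<subseteq> S"
  then show "bij_betw (point T) {..<Q T} (cech_obj I N f T)" by (rule bij_betw_point)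
  fix k k' assume "k < Q T" "k' < Q T"
  then show "k \<le> k' \<longleftrightarrow> cech_le T (point T k) (point T k')"
    using point_le_iff[OF \<open>T \<subseteq> S\<close>] by simp
next
  fix T T' k assume "T \<subseteq> T'" "T' \<subseteq> S" "k < Q T'"
  then show "point T (M T T' k) = (fst (point T' k), restrict (snd (point T' k)) T)"
    by (simp add: point_natural cech_proj_def)
qed

lemma backwards_compatible: "backwards_compatible S I N f"
  unfolding backwards_compatible_def
proof (intro allI impI ballI; rule ccontr)
  fix i s s' assume "i < N" "s \<in> S" "s' \<in> S" "s \<noteq> s'"
    and card: "1 < card (fiber I f s i)" "1 < card (fiber I f s' i)"
  obtain p q where pq: "p \<in> cech_obj I N f {s, s'}" "q \<in> cech_obj I N f {s, s'}"
    "\<not> cech_le {s, s'} p q" "\<not> cech_le {s, s'} q p"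
    using cech_obj_incomparable[OF \<open>i < N\<close> \<open>s \<noteq> s'\<close> card] by blast
  have "{s, s'} \<subseteq> S" using \<open>s \<in> S\<close> \<open>s' \<in> S\<close> by simp
  obtain k where k: "k < Q {s, s'}" "p = point {s, s'} k"
    using subsetD[OF point_surj[OF \<open>{s, s'} \<subseteq> S\<close>] pq(1)] by blast
  obtain k' where k': "k' < Q {s, s'}" "q = point {s, s'} k'"
    using subsetD[OF point_surj[OF \<open>{s, s'} \<subseteq> S\<close>] pq(2)] by blast
  show False
    using pq(3,4) point_le_iff[OF \<open>{s, s'} \<subseteq> S\<close> k(1) k'(1)]
      point_le_iff[OF \<open>{s, s'} \<subseteq> S\<close> k'(1) k(1)]
    unfolding k k' by linarith
qed

section \<open>Pushout squares of a Cech cube\<close>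

lemma extends_iff:
  assumes "T \<subseteq> S" "s \<in> S" "s \<notin> T" "\<delta> < Q T"
  shows "(\<exists>\<beta><Q (T \<union> {s}). M T (T \<union> {s}) \<beta> = \<delta>) \<longleftrightarrow> fiber I f s (M {} T \<delta>) \<noteq> {}"
proof
  have sub: "T \<union> {s} \<subseteq> S" "T \<subseteq> T \<union> {s}" using assms by auto
  assume "\<exists>\<beta><Q (T \<union> {s}). M T (T \<union> {s}) \<beta> = \<delta>"
  then obtain \<beta> where \<beta>: "\<beta> < Q (T \<union> {s})" "M T (T \<union> {s}) \<beta> = \<delta>" by blast
  have "snd (point (T \<union> {s}) \<beta>) s \<in> fiber I f s (fst (point (T \<union> {s}) \<beta>))"
    using point_in[OF sub(1) \<beta>(1)] by (simp add: mem_cech_obj PiE_iff)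
  moreover have "fst (point (T \<union> {s}) \<beta>) = M {} T \<delta>"
    using M_comp[of "{}" T "T \<union> {s}" \<beta>] sub \<beta> by (simp add: point_def)
  ultimately show "fiber I f s (M {} T \<delta>) \<noteq> {}" by auto
next
  have sub: "T \<union> {s} \<subseteq> S" "T \<subseteq> T \<union> {s}" using assms by auto
  assume "fiber I f s (M {} T \<delta>) \<noteq> {}"
  then obtain y where y: "y \<in> fiber I f s (M {} T \<delta>)" by blast
  have "(M {} T \<delta>, restrict (\<lambda>_. y) {s}) \<in> cech_obj I N f {s}"
    using y M_empty_less[OF assms(1,4)] by (simp add: cech_obj_def)
  moreover have
    "cech_proj (T \<inter> {s}) (point T \<delta>) = cech_proj (T \<inter> {s}) (M {} T \<delta>, restrict (\<lambda>_. y) {s})"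
    using assms(3) by (simp add: cech_proj_def point_def restrict_def)
  ultimately obtain r where r: "r \<in> cech_obj I N f (T \<union> {s})" "cech_proj T r = point T \<delta>"
    using cech_obj_glue[OF point_in[OF assms(1,4)]] by blast
  then obtain \<beta> where \<beta>: "\<beta> < Q (T \<union> {s})" "r = point (T \<union> {s}) \<beta>"
    using point_surj[OF sub(1)] by blast
  have "point T (M T (T \<union> {s}) \<beta>) = point T \<delta>"
    using point_natural[OF sub(2,1) \<beta>(1)] r \<beta> by simp
  then have "M T (T \<union> {s}) \<beta> = \<delta>"
    using inj_on_point[OF assms(1)] M_less[OF sub(2,1) \<beta>(1)] assms(4) by (auto dest: inj_onD)
  then show "\<exists>\<beta><Q (T \<union> {s}). M T (T \<union> {s}) \<beta> = \<delta>" using \<beta>(1) by blast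
qed

text \<open>Over a value \<open>i\<close> whose \<open>s\<close>-fibre has at most one element, adding the coordinate
  \<open>s\<close> does not change the order.\<close>

lemma extension_le:
  assumes T: "T \<subseteq> S" and s: "s \<in> S"
    and \<beta>: "\<beta> < Q (T \<union> {s})" "M T (T \<union> {s}) \<beta> = \<delta>"
    and \<beta>': "\<beta>' < Q (T \<union> {s})" "M T (T \<union> {s}) \<beta>' = \<delta>'"
    and "\<delta> \<le> \<delta>'" "M {} T \<delta> = M {} T \<delta>'" and single: "card (fiber I f s (M {} T \<delta>)) \<le> 1"
  shows "\<beta> \<le> \<beta>'"
proof -
  define B where "B = T \<union> {s}"
  have sub: "B \<subseteq> S" "T \<subseteq> B" using T s by (auto simp: B_def)
  have via_T: "M U B k = M U T (M T B k)" if "U \<subseteq> T" "k < Q B" for U k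
    using M_comp[OF that(1) sub(2,1) that(2)] by simp
  have same: "M {} B \<beta> = M {} B \<beta>'"
    using via_T[of "{}"] \<beta> \<beta>' \<open>M {} T \<delta> = M {} T \<delta>'\<close> by (simp add: B_def)
  have "M {t} B \<beta> \<le> M {t} B \<beta>'" if "t \<in> B" for t
  proof (cases "t \<in> T")
    case True
    moreover have "\<delta>' < Q T" using M_less[OF sub(2,1), of \<beta>'] \<beta>' by (simp add: B_def)
    ultimately show ?thesis
      using via_T[of "{t}"] M_mono[of "{t}" T \<delta> \<delta>'] T \<beta> \<beta>' \<open>\<delta> \<le> \<delta>'\<close>
      by (simp add: B_def)
  next
    case False
    then have "t = s" using that by (simp add: B_def)
    have mem: "M {s} B k \<in> fiber I f s (M {} B k)" if "k < Q B" for k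
      using point_in[OF sub(1) that] by (simp add: mem_cech_obj PiE_iff point_def B_def)
    have "M {s} B \<beta> \<in> fiber I f s (M {} T \<delta>)" "M {s} B \<beta>' \<in> fiber I f s (M {} T \<delta>)"
      using mem[of \<beta>] mem[of \<beta>'] via_T[of "{}"] \<beta> \<beta>' same by (simp_all add: B_def)
    then have "M {s} B \<beta> = M {s} B \<beta>'" by (rule card_fiber_le_1_eq[OF single])
    then show ?thesis using \<open>t = s\<close> by simp
  qed
  then have "cech_le B (point B \<beta>) (point B \<beta>')"
    using same by (simp add: cech_le_def point_def)
  then show ?thesis using point_le_iff[OF sub(1)] \<beta>(1) \<beta>'(1) by (simp add: B_def)
qed

lemma exists_point_over:
  assumes "T \<subseteq> S" "m < N" "\<forall>t\<in>T. fiber I f t m \<noteq> {}"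
  shows "\<exists>\<alpha><Q T. M {} T \<alpha> = m"
proof -
  define x where "x t = (SOME y. y \<in> fiber I f t m)" for t
  have "x t \<in> fiber I f t m" if "t \<in> T" for t
    unfolding x_def using assms(3) that by (simp add: some_in_eq)
  then have "(m, restrict x T) \<in> cech_obj I N f T" using assms(2) by (simp add: cech_obj_def)
  then have "(m, restrict x T) \<in> point T ` {..<Q T}" using point_surj[OF assms(1)] by blast
  then obtain \<alpha> where "\<alpha> < Q T" "point T \<alpha> = (m, restrict x T)" by auto
  then show ?thesis by (auto simp: point_def)
qed

context
  assumes comp: "compatible S I N f"
begin

lemma compatible_extends:
  assumes T: "T \<subseteq> S" and s: "s \<in> S" "s' \<in> S" "s \<noteq> s'" "s \<notin> T" "s' \<notin> T" and "\<delta> < Q T"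
  shows "(\<exists>\<beta><Q (T \<union> {s}). M T (T \<union> {s}) \<beta> = \<delta>) \<or> (\<exists>\<gamma><Q (T \<union> {s'}). M T (T \<union> {s'}) \<gamma> = \<delta>)"
  using compatible_card_fiber[OF comp M_empty_less[OF T \<open>\<delta> < Q T\<close>] s(1-3)]
    extends_iff[OF T s(1,4) \<open>\<delta> < Q T\<close>] extends_iff[OF T s(2,5) \<open>\<delta> < Q T\<close>] by fastforce

lemma compatible_extension_unique:
  assumes T: "T \<subseteq> S" and s: "s \<in> S" "s' \<in> S" "s \<noteq> s'" "s' \<notin> T"
    and miss: "\<not> (\<exists>\<gamma><Q (T \<union> {s'}). M T (T \<union> {s'}) \<gamma> = M T (T \<union> {s}) \<beta>)"
    and \<beta>: "\<beta> < Q (T \<union> {s})" "\<beta>' < Q (T \<union> {s})" "M T (T \<union> {s}) \<beta> = M T (T \<union> {s}) \<beta>'"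
  shows "\<beta> = \<beta>'"
proof -
  define \<delta> where "\<delta> = M T (T \<union> {s}) \<beta>"
  have "\<delta> < Q T" using M_less[of T "T \<union> {s}" \<beta>] T s \<beta> by (auto simp: \<delta>_def)
  then have "fiber I f s' (M {} T \<delta>) = {}"
    using extends_iff[OF T s(2,4)] miss by (simp add: \<delta>_def)
  then have "card (fiber I f s (M {} T \<delta>)) = 1"
    using compatible_card_fiber[OF comp M_empty_less[OF T \<open>\<delta> < Q T\<close>] s(1-3)] by auto
  then show ?thesis
    using extension_le[OF T s(1), of \<beta> \<delta> \<beta>' \<delta>] extension_le[OF T s(1), of \<beta>' \<delta> \<beta> \<delta>] \<beta>
    by (simp add: \<delta>_def)
qed

abbreviation linked :: "'a set \<Rightarrow> 'a \<Rightarrow> 'a \<Rightarrow> nat \<Rightarrow> nat \<Rightarrow> bool" where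
  "linked T s s' \<equiv> square_linked (Q (T \<union> {s, s'})) (Q (T \<union> {s})) (Q (T \<union> {s'}))
     (M (T \<union> {s}) (T \<union> {s, s'})) (M (T \<union> {s'}) (T \<union> {s, s'})) (M T (T \<union> {s})) (M T (T \<union> {s'}))"

lemma linked_swap: "linked T s' s \<delta> \<delta>' \<longleftrightarrow> linked T s s' \<delta> \<delta>'"
  using square_linked_swap by (simp add: insert_commute)

lemma linked_if_level_eq:
  assumes T: "T \<subseteq> S" and s: "s \<in> S" "s \<notin> T" and "\<delta> \<le> \<delta>'" "\<delta>' < Q T"
    and level: "M {} T \<delta> = M {} T \<delta>'" and single: "card (fiber I f s (M {} T \<delta>)) = 1"
  shows "linked T s s' \<delta> \<delta>'"
proof -
  have "\<delta> < Q T" using assms by simp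
  have "fiber I f s (M {} T \<delta>) \<noteq> {}" "fiber I f s (M {} T \<delta>') \<noteq> {}" using single level by auto
  then obtain \<beta> \<beta>' where \<beta>: "\<beta> < Q (T \<union> {s})" "M T (T \<union> {s}) \<beta> = \<delta>"
    and \<beta>': "\<beta>' < Q (T \<union> {s})" "M T (T \<union> {s}) \<beta>' = \<delta>'"
    using extends_iff[OF T s \<open>\<delta> < Q T\<close>] extends_iff[OF T s \<open>\<delta>' < Q T\<close>] by blast
  then have "\<beta> \<le> \<beta>'" using extension_le[OF T s(1) \<beta> \<beta>'] assms(4) level single by simp
  then show ?thesis using \<beta> \<beta>' unfolding square_linked_def by blast
qed

text \<open>The crossing case: (BC2) provides a value between the two levels that is hit by
  all coordinates, and a point of the top corner over it bridges the two legs.\<close>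

lemma linked_across:
  assumes T: "T \<subseteq> S" and s: "s \<in> S" "s' \<in> S" "s \<noteq> s'"
    and "\<delta>' < Q T" and less: "M {} T \<delta> < M {} T \<delta>'"
    and \<beta>: "\<beta> < Q (T \<union> {s})" "M T (T \<union> {s}) \<beta> = \<delta>"
    and \<gamma>': "\<gamma>' < Q (T \<union> {s'})" "M T (T \<union> {s'}) \<gamma>' = \<delta>'"
    and miss: "fiber I f s' (M {} T \<delta>) = {}" "fiber I f s (M {} T \<delta>') = {}"
  shows "linked T s s' \<delta> \<delta>'"
proof -
  define A B C where "A = T \<union> {s, s'}" and "B = T \<union> {s}" and "C = T \<union> {s'}"
  have sub: "A \<subseteq> S" "B \<subseteq> S" "C \<subseteq> S" "B \<subseteq> A" "C \<subseteq> A" "T \<subseteq> B" "T \<subseteq> C" "s \<in> A" "s' \<in> A"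
    using T s by (auto simp: A_def B_def C_def)
  note \<beta> = \<beta>[folded B_def] and \<gamma>' = \<gamma>'[folded C_def]
  have bound: "M {} T \<delta>' < N" using M_empty_less[OF T \<open>\<delta>' < Q T\<close>] .
  obtain m where m: "M {} T \<delta> < m" "m < M {} T \<delta>'" "\<forall>t\<in>A. fiber I f t m \<noteq> {}"
    using compatible_common_value_between[OF comp sub(1,8,9) s(3) less bound] miss by blast
  then obtain \<alpha> where \<alpha>: "\<alpha> < Q A" "M {} A \<alpha> = m"
    using exists_point_over[OF sub(1)] bound by (meson order.strict_trans)
  have "M {} B (M B A \<alpha>) = m" "M {} C (M C A \<alpha>) = m"
    using M_comp[of "{}" _ A \<alpha>] sub \<alpha> by auto
  moreover have "M {} B \<beta> = M {} T \<delta>" "M {} C \<gamma>' = M {} T \<delta>'"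
    using M_comp[of "{}" T B \<beta>] M_comp[of "{}" T C \<gamma>'] sub \<beta> \<gamma>' by auto
  ultimately have "\<beta> \<le> M B A \<alpha>" "M C A \<alpha> \<le> \<gamma>'"
    using M_empty_reflects_less[OF sub(2) \<beta>(1) M_less[OF sub(4,1) \<alpha>(1)]]
      M_empty_reflects_less[OF sub(3) M_less[OF sub(5,1) \<alpha>(1)] \<gamma>'(1)] m(1,2) by simp_all
  then have "square_linked (Q A) (Q B) (Q C) (M B A) (M C A) (M T B) (M T C) \<delta> \<delta>'"
    using \<alpha>(1) \<beta> \<gamma>' unfolding square_linked_def by blast
  then show ?thesis by (simp only: A_def B_def C_def)
qed

lemma linked_if_level_less:
  assumes T: "T \<subseteq> S" and s: "s \<in> S" "s' \<in> S" "s \<noteq> s'" "s \<notin> T" "s' \<notin> T"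
    and "\<delta>' < Q T" and less: "M {} T \<delta> < M {} T \<delta>'"
    and \<beta>: "\<beta> < Q (T \<union> {s})" "M T (T \<union> {s}) \<beta> = \<delta>"
  shows "linked T s s' \<delta> \<delta>'"
proof -
  define A B C where "A = T \<union> {s, s'}" and "B = T \<union> {s}" and "C = T \<union> {s'}"
  have sub: "B \<subseteq> S" "C \<subseteq> S" "T \<subseteq> B" "T \<subseteq> C"
    using T s by (auto simp: B_def C_def)
  have level_B: "M {} B x = M {} T (M T B x)" if "x < Q B" for x
    using M_comp[of "{}" T B x] sub that by simp
  have level_C: "M {} C x = M {} T (M T C x)" if "x < Q C" for x
    using M_comp[of "{}" T C x] sub that by simp
  have "\<delta> < Q T" using M_less[OF sub(3,1)] \<beta> by (auto simp: B_def)
  note \<beta> = \<beta>[folded B_def]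
  have "square_linked (Q A) (Q B) (Q C) (M B A) (M C A) (M T B) (M T C) \<delta> \<delta>'"
  proof (cases "\<exists>\<beta>'<Q B. M T B \<beta>' = \<delta>'")
    case True
    then obtain \<beta>' where \<beta>': "\<beta>' < Q B" "M T B \<beta>' = \<delta>'" by blast
    then have "\<beta> \<le> \<beta>'" using M_empty_reflects_less[OF sub(1) \<beta>(1) \<beta>'(1)] level_B \<beta> less by simp
    then show ?thesis using \<beta> \<beta>' unfolding square_linked_def by blast
  next
    case miss_s: False
    then obtain \<gamma>' where \<gamma>': "\<gamma>' < Q C" "M T C \<gamma>' = \<delta>'"
      using compatible_extends[OF T s \<open>\<delta>' < Q T\<close>] by (auto simp: B_def C_def)
    show ?thesis
    proof (cases "\<exists>\<gamma><Q C. M T C \<gamma> = \<delta>")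
      case True
      then obtain \<gamma> where \<gamma>: "\<gamma> < Q C" "M T C \<gamma> = \<delta>" by blast
      then have "\<gamma> \<le> \<gamma>'" using M_empty_reflects_less[OF sub(2) \<gamma>(1) \<gamma>'(1)] level_C \<gamma>' less by simp
      then show ?thesis using \<gamma> \<gamma>' unfolding square_linked_def by blast
    next
      case miss_s': False
      have "fiber I f s' (M {} T \<delta>) = {}" "fiber I f s (M {} T \<delta>') = {}"
        using extends_iff[OF T s(2,5) \<open>\<delta> < Q T\<close>] extends_iff[OF T s(1,4) \<open>\<delta>' < Q T\<close>] miss_s miss_s'
        by (auto simp: B_def C_def)
      then show ?thesis
        using linked_across[OF T s(1-3) \<open>\<delta>' < Q T\<close> less, folded A_def B_def C_def] \<beta> \<gamma>' by blast
    qed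
  qed
  then show ?thesis by (simp only: A_def B_def C_def)
qed

lemma pushout_square:
  assumes T: "T \<subseteq> S" and s: "s \<in> S" "s' \<in> S" "s \<noteq> s'" "s \<notin> T" "s' \<notin> T"
  shows "is_pushout (Q (T \<union> {s, s'})) (Q (T \<union> {s})) (Q (T \<union> {s'})) (Q T)
    (M (T \<union> {s}) (T \<union> {s, s'})) (M (T \<union> {s'}) (T \<union> {s, s'}))
    (M T (T \<union> {s})) (M T (T \<union> {s'}))"
proof -
  have linked: "linked T s s' \<delta> \<delta>'" if "\<delta> < \<delta>'" "\<delta>' < Q T" for \<delta> \<delta>'
  proof -
    have "\<delta> < Q T" using that by simp
    have "M {} T \<delta> \<le> M {} T \<delta>'" using M_mono[of "{}" T \<delta> \<delta>'] T that by simp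
    moreover have "linked T s s' \<delta> \<delta>'" if "M {} T \<delta> = M {} T \<delta>'"
      using compatible_card_fiber[OF comp M_empty_less[OF T \<open>\<delta> < Q T\<close>] s(1-3)]
        linked_if_level_eq[OF T s(1,4), of \<delta> \<delta>' s'] linked_if_level_eq[OF T s(2,5), of \<delta> \<delta>' s]
        linked_swap \<open>\<delta> < \<delta>'\<close> \<open>\<delta>' < Q T\<close> that by auto
    moreover have "linked T s s' \<delta> \<delta>'" if "M {} T \<delta> < M {} T \<delta>'"
      using compatible_extends[OF T s \<open>\<delta> < Q T\<close>]
        linked_if_level_less[OF T s \<open>\<delta>' < Q T\<close> that]
        linked_if_level_less[OF T s(2,1) s(3)[symmetric] s(5,4) \<open>\<delta>' < Q T\<close> that] linked_swap
      by blast
    ultimately show ?thesis by linarith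
  qed
  note pb = pullback_square[OF T s]
  show ?thesis
    by (rule pushoutI[OF is_pullback_square[OF pb] pullback_jointly_surj[OF pb]
          compatible_extends[OF T s] compatible_extension_unique[OF T s(1-3,5)]
          compatible_extension_unique[OF T s(2,1) s(3)[symmetric] s(4)] linked])
qed

end

lemma strongly_cocartesian_if_compatible: "compatible S I N f \<Longrightarrow> strongly_cocartesian S Q M"
  unfolding strongly_cocartesian_def using pushout_square by blast

lemma pushout_pair:
  assumes "strongly_cocartesian S Q M" "s \<in> S" "s' \<in> S" "s \<noteq> s'"
  shows "is_pushout (Q {s, s'}) (Q {s}) (Q {s'}) (Q {})
    (M {s} {s, s'}) (M {s'} {s, s'}) (M {} {s}) (M {} {s'})"
proof -
  have "is_pushout (Q ({} \<union> {s, s'})) (Q ({} \<union> {s})) (Q ({} \<union> {s'})) (Q {})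
    (M ({} \<union> {s}) ({} \<union> {s, s'})) (M ({} \<union> {s'}) ({} \<union> {s, s'})) (M {} ({} \<union> {s}))
      (M {} ({} \<union> {s'}))"
    using assms unfolding strongly_cocartesian_def by blast
  then show ?thesis by simp
qed

lemma hit_singleton_iff: "s \<in> S \<Longrightarrow> (\<exists>\<beta><Q {s}. M {} {s} \<beta> = i) \<longleftrightarrow> fiber I f s i \<noteq> {}"
  by (auto simp: fiber_def Q_singleton M_empty_singleton)

lemma cocartesian_card_fiber:
  assumes co: "strongly_cocartesian S Q M" and s: "s \<in> S" "s' \<in> S" "s \<noteq> s'"
    and "i < N" "fiber I f s i = {}"
  shows "card (fiber I f s' i) = 1"
proof -
  note po = pushout_pair[OF co s]
  have miss: "\<not> (\<exists>\<beta><Q {s}. M {} {s} \<beta> = i)" using hit_singleton_iff[OF s(1)] assms(6) by simp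
  then obtain j where j: "j \<in> fiber I f s' i"
    using pushout_jointly_surj[OF po, of i] hit_singleton_iff[OF s(2)] assms(5) Q_empty by auto
  have "j' = j" if "j' \<in> fiber I f s' i" for j'
    using pushout_inj_off_image[OF po miss, of j' j] that j s(2)
    by (simp add: fiber_def Q_singleton M_empty_singleton)
  then have "fiber I f s' i = {j}" using j by blast
  then show ?thesis by simp
qed

lemma cocartesian_no_switch:
  assumes co: "strongly_cocartesian S Q M" and s: "s \<in> S" "s' \<in> S" "s \<noteq> s'"
    and "Suc i < N" "fiber I f s i = {}" "fiber I f s' (Suc i) = {}"
  shows False
proof -
  have "fiber I f s' i \<noteq> {}" "fiber I f s (Suc i) \<noteq> {}"
    using cocartesian_card_fiber[OF co s, of i]
      cocartesian_card_fiber[OF co s(2,1) s(3)[symmetric], of "Suc i"]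
      assms(5-7) by auto
  then obtain \<gamma> \<beta> where "\<gamma> < Q {s'}" "M {} {s'} \<gamma> = i" "\<beta> < Q {s}" "M {} {s} \<beta> = Suc i"
    using hit_singleton_iff s(1,2) by blast
  moreover have "\<not> (\<exists>\<beta><Q {s}. M {} {s} \<beta> = i)" "\<not> (\<exists>\<gamma><Q {s'}. M {} {s'} \<gamma> = Suc i)"
    using hit_singleton_iff s(1,2) assms(6,7) by simp_all
  moreover have "Suc i < Q {}" using assms(5) Q_empty by simp
  ultimately show False using pushout_no_switch[OF pushout_pair[OF co s]] by blast
qed

lemma cocartesian_card_fiber_eq_1:
  assumes co: "strongly_cocartesian S Q M" and "i < N" "s \<in> S" "s' \<in> S" "s \<noteq> s'"
  shows "card (fiber I f s i) = 1 \<or> card (fiber I f s' i) = 1"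
proof (rule ccontr)
  assume card: "\<not> ?thesis"
  have "\<not> (1 < card (fiber I f s i) \<and> 1 < card (fiber I f s' i))"
    using backwards_compatible assms(2-5) unfolding backwards_compatible_def by blast
  then have "card (fiber I f s i) = 0 \<or> card (fiber I f s' i) = 0" using card by linarith
  then have "fiber I f s i = {} \<or> fiber I f s' i = {}" by (simp add: card_eq_0_iff finite_fiber)
  then show False
    using cocartesian_card_fiber[OF co assms(3-5,2)]
      cocartesian_card_fiber[OF co assms(4,3) assms(5)[symmetric] assms(2)] card
    by argo
qed

lemma cocartesian_adjacent:
  assumes co: "strongly_cocartesian S Q M" and s: "s \<in> S" "s' \<in> S" "s \<noteq> s'" and j: "Suc j < N"
    and miss: "fiber I f s j = {} \<or> fiber I f s (Suc j) = {}"
      "fiber I f s' j = {} \<or> fiber I f s' (Suc j) = {}"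
  shows False
proof -
  have hit: "fiber I f t' m \<noteq> {}" if "t \<in> S" "t' \<in> S" "t \<noteq> t'" "m < N" "fiber I f t m = {}"
    for t t' m
    using cocartesian_card_fiber[OF co that] by auto
  from miss(1) show False
  proof
    assume "fiber I f s j = {}"
    moreover from this have "fiber I f s' (Suc j) = {}" using hit[OF s, of j] j miss(2) by simp
    ultimately show False using cocartesian_no_switch[OF co s j] by simp
  next
    assume "fiber I f s (Suc j) = {}"
    moreover from this have "fiber I f s' j = {}" using hit[OF s, of "Suc j"] j miss(2) by simp
    ultimately show False using cocartesian_no_switch[OF co s(2,1) s(3)[symmetric] j] by simp
  qed
qed

lemma compatible_if_cocartesian:
  assumes co: "strongly_cocartesian S Q M"
  shows "compatible S I N f"
  unfolding compatible_def
proof (intro conjI allI impI ballI; rule ccontr)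
  fix i s s' assume "i < N" "s \<in> S" "s' \<in> S" "card (fiber I f s i) \<noteq> 1" "card (fiber I f s' i) \<noteq> 1"
    "s \<noteq> s'"
  then show False using cocartesian_card_fiber_eq_1[OF co] by blast
next
  fix i s s' assume "0 < i" "i < N" "s \<in> S" "s' \<in> S" "s \<noteq> s'"
    and "\<not> {i - 1, i} \<subseteq> f s ` {..<I s}" "\<not> {i - 1, i} \<subseteq> f s' ` {..<I s'}"
  moreover obtain j where "i = Suc j" using \<open>0 < i\<close> gr0_conv_Suc by blast
  ultimately show False
    using cocartesian_adjacent[OF co \<open>s \<in> S\<close> \<open>s' \<in> S\<close> \<open>s \<noteq> s'\<close>, of j]
    by (auto simp: fiber_eq_empty_iff)
qed

end

section \<open>Construction of the Cech cube\<close>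

locale backwards_compatible_claw =
  fixes S :: "'a set" and I :: "'a \<Rightarrow> nat" and N :: nat and f :: "'a \<Rightarrow> nat \<Rightarrow> nat"
  assumes finite_S: "finite S" and dmor_claw: "\<And>s. s \<in> S \<Longrightarrow> dmor (I s) N (f s)"
    and bc: "backwards_compatible S I N f"
begin

definition rank :: "'a set \<Rightarrow> nat \<times> ('a \<Rightarrow> nat) \<Rightarrow> nat" where
  "rank T = order_rank (cech_obj I N f T) (cech_le T)"

definition unrank :: "'a set \<Rightarrow> nat \<Rightarrow> nat \<times> ('a \<Rightarrow> nat)" where
  "unrank T = inv_into (cech_obj I N f T) (rank T)"

definition cech_size :: "'a set \<Rightarrow> nat" where
  "cech_size T = card (cech_obj I N f T)"

definition cech_map :: "'a set \<Rightarrow> 'a set \<Rightarrow> nat \<Rightarrow> nat" where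
  "cech_map T T' k = rank T (cech_proj T (unrank T' k))"

lemma linorder_on_cech_le:
  assumes "T \<subseteq> S"
  shows "linorder_on (cech_obj I N f T) (cech_le T)"
  unfolding linorder_on_def
proof (intro conjI ballI impI)
  fix p q assume "p \<in> cech_obj I N f T" "q \<in> cech_obj I N f T"
  then show "cech_le T p q \<or> cech_le T q p" by (rule cech_le_total[OF bc assms])
next
  fix p q assume "p \<in> cech_obj I N f T" "q \<in> cech_obj I N f T" "cech_le T p q" "cech_le T q p"
  then show "p = q" by (rule cech_le_antisym)
next
  fix p q r assume "cech_le T p q" "cech_le T q r"
  then show "cech_le T p r" by (rule cech_le_trans)
qed

lemma finite_obj: "T \<subseteq> S \<Longrightarrow> finite (cech_obj I N f T)"
  by (rule finite_cech_obj) (rule finite_subset[OF _ finite_S])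

lemma bij_betw_rank: "T \<subseteq> S \<Longrightarrow> bij_betw (rank T) (cech_obj I N f T) {..<cech_size T}"
  unfolding rank_def cech_size_def by (rule bij_betw_order_rank[OF finite_obj linorder_on_cech_le])

lemma rank_le_iff:
  "T \<subseteq> S \<Longrightarrow> p \<in> cech_obj I N f T \<Longrightarrow> q \<in> cech_obj I N f T \<Longrightarrow>
    cech_le T p q \<longleftrightarrow> rank T p \<le> rank T q"
  unfolding rank_def by (rule order_rank_le_iff[OF finite_obj linorder_on_cech_le])

lemma rank_less: "T \<subseteq> S \<Longrightarrow> p \<in> cech_obj I N f T \<Longrightarrow> rank T p < cech_size T"
  using bij_betw_rank by (auto simp: bij_betw_def)

lemma unrank_in: "T \<subseteq> S \<Longrightarrow> k < cech_size T \<Longrightarrow> unrank T k \<in> cech_obj I N f T"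
  unfolding unrank_def using bij_betw_rank by (metis bij_betw_def inv_into_into lessThan_iff)

lemma rank_unrank: "T \<subseteq> S \<Longrightarrow> k < cech_size T \<Longrightarrow> rank T (unrank T k) = k"
  unfolding unrank_def using bij_betw_rank by (metis bij_betw_inv_into_right lessThan_iff)

lemma unrank_rank: "T \<subseteq> S \<Longrightarrow> p \<in> cech_obj I N f T \<Longrightarrow> unrank T (rank T p) = p"
  unfolding unrank_def using bij_betw_rank by (metis bij_betw_inv_into_left)

lemma cech_map_dmor:
  assumes "T \<subseteq> T'" "T' \<subseteq> S"
  shows "dmor (cech_size T') (cech_size T) (cech_map T T')"
  unfolding dmor_def
proof (intro conjI allI impI)
  have TS: "T \<subseteq> S" using assms by simp
  fix k assume "k < cech_size T'"
  then show "cech_map T T' k < cech_size T"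
    unfolding cech_map_def using rank_less[OF TS cech_proj_in[OF assms(1) unrank_in[OF assms(2)]]]
      by simp
next
  have TS: "T \<subseteq> S" using assms by simp
  fix k k' assume "k \<le> k'" "k' < cech_size T'"
  then have k: "k < cech_size T'" by simp
  have "cech_le T' (unrank T' k) (unrank T' k')"
    using rank_le_iff[OF assms(2) unrank_in[OF assms(2) k]
        unrank_in[OF assms(2) \<open>k' < cech_size T'\<close>]]
      rank_unrank[OF assms(2)] k \<open>k \<le> k'\<close> \<open>k' < cech_size T'\<close> by simp
  then show "cech_map T T' k \<le> cech_map T T' k'"
    unfolding cech_map_def using cech_le_proj[OF assms(1)]
      rank_le_iff[OF TS cech_proj_in[OF assms(1) unrank_in[OF assms(2) k]]
        cech_proj_in[OF assms(1) unrank_in[OF assms(2) \<open>k' < cech_size T'\<close>]]] by simp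
qed

lemma unrank_cech_map:
  "T \<subseteq> T' \<Longrightarrow> T' \<subseteq> S \<Longrightarrow> k < cech_size T' \<Longrightarrow> unrank T (cech_map T T' k) = cech_proj T (unrank T' k)"
  unfolding cech_map_def by (rule unrank_rank[OF _ cech_proj_in[OF _ unrank_in]]) auto

lemma cech_map_comp:
  "T \<subseteq> T' \<Longrightarrow> T' \<subseteq> T'' \<Longrightarrow> T'' \<subseteq> S \<Longrightarrow> k < cech_size T'' \<Longrightarrow>
    cech_map T T' (cech_map T' T'' k) = cech_map T T'' k"
  using unrank_cech_map[of T' T'' k] by (simp add: cech_map_def cech_proj_proj)

lemma is_cube: "is_cube S cech_size cech_map"
  unfolding is_cube_def
proof (intro conjI allI impI)
  show "dmor (cech_size T') (cech_size T) (cech_map T T')" if "T \<subseteq> T'" "T' \<subseteq> S" for T T'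
    using that by (rule cech_map_dmor)
  show "meq (cech_size T) (cech_map T T) id" if "T \<subseteq> S" for T
    unfolding meq_def
  proof (intro allI impI)
    fix k assume "k < cech_size T"
    then show "cech_map T T k = id k"
      using cech_proj_id[OF unrank_in[OF that \<open>k < cech_size T\<close>]]
        rank_unrank[OF that \<open>k < cech_size T\<close>]
      by (simp add: cech_map_def)
  qed
  show "meq (cech_size T'') (cech_map T T' \<circ> cech_map T' T'') (cech_map T T'')"
    if "T \<subseteq> T'" "T' \<subseteq> T''" "T'' \<subseteq> S" for T T' T''
    unfolding meq_def
  proof (intro allI impI)
    fix k assume "k < cech_size T''"
    then show "(cech_map T T' \<circ> cech_map T' T'') k = cech_map T T'' k"
      using cech_map_comp[OF that] by simp
  qed
qed

lemma cech_map_le_iff: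
  assumes "T \<subseteq> T'" "T' \<subseteq> S" "k < cech_size T'" "k' < cech_size T'"
  shows "cech_map T T' k \<le> cech_map T T' k' \<longleftrightarrow>
    cech_le T (cech_proj T (unrank T' k)) (cech_proj T (unrank T' k'))"
  unfolding cech_map_def using assms
  by (intro rank_le_iff[symmetric] cech_proj_in[OF assms(1)] unrank_in) auto

lemma strongly_cartesian: "strongly_cartesian S cech_size cech_map"
  unfolding strongly_cartesian_def
proof (intro allI impI)
  fix T s s' assume T: "T \<subseteq> S" and s: "s \<in> S" "s' \<in> S" "s \<noteq> s'" "s \<notin> T" "s' \<notin> T"
  define A B C where "A = T \<union> {s, s'}" and "B = T \<union> {s}" and "C = T \<union> {s'}"
  have sub: "A \<subseteq> S" "B \<subseteq> A" "C \<subseteq> A" "T \<subseteq> B" "T \<subseteq> C" "B \<subseteq> S" "C \<subseteq> S"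
    "B \<inter> C = T" "B \<union> C = A"
    using T s by (auto simp: A_def B_def C_def)
  have "is_square (cech_size A) (cech_size B) (cech_size C) (cech_size T) (cech_map B A)
    (cech_map C A) (cech_map T B) (cech_map T C)"
    unfolding is_square_def meq_def
    using cech_map_dmor[OF sub(2,1)] cech_map_dmor[OF sub(3,1)] cech_map_dmor[OF sub(4,6)]
      cech_map_dmor[OF sub(5,7)]
      cech_map_comp[OF sub(4,2,1)] cech_map_comp[OF sub(5,3,1)] by simp
  then have
    "is_pullback (cech_size A) (cech_size B) (cech_size C) (cech_size T) (cech_map B A)
      (cech_map C A) (cech_map T B) (cech_map T C)"
  proof (rule pullbackI)
    fix y z assume y: "y < cech_size B" and z: "z < cech_size C"
      and eq: "cech_map T B y = cech_map T C z"
    have "cech_proj (B \<inter> C) (unrank B y) = cech_proj (B \<inter> C) (unrank C z)"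
      using unrank_cech_map[OF sub(4,6) y] unrank_cech_map[OF sub(5,7) z] eq sub(8) by simp
    then obtain r where r: "r \<in> cech_obj I N f A" "cech_proj B r = unrank B y"
      "cech_proj C r = unrank C z"
      using cech_obj_glue[OF unrank_in[OF sub(6) y] unrank_in[OF sub(7) z], unfolded sub(9)]
        by blast
    have "cech_map B A (rank A r) = y" "cech_map C A (rank A r) = z"
      using r unrank_rank[OF sub(1) r(1)] rank_unrank[OF sub(6) y] rank_unrank[OF sub(7) z]
      by (simp_all add: cech_map_def)
    then show "\<exists>w<cech_size A. cech_map B A w = y \<and> cech_map C A w = z"
      using rank_less[OF sub(1) r(1)] by blast
  next
    fix w w' assume w: "w < cech_size A" "w' < cech_size A"
      and "cech_map B A w \<le> cech_map B A w'" "cech_map C A w \<le> cech_map C A w'"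
    then have "cech_le B (cech_proj B (unrank A w)) (cech_proj B (unrank A w'))"
      "cech_le C (cech_proj C (unrank A w)) (cech_proj C (unrank A w'))"
      using cech_map_le_iff[OF sub(2,1) w] cech_map_le_iff[OF sub(3,1) w] by simp_all
    then have "cech_le A (unrank A w) (unrank A w')"
      using cech_le_union[of B _ _ C] sub(9) by simp
    then show "w \<le> w'"
      using rank_le_iff[OF sub(1) unrank_in[OF sub(1) w(1)] unrank_in[OF sub(1) w(2)]]
        rank_unrank[OF sub(1)] w by simp
  qed
  then show
    "is_pullback (cech_size (T \<union> {s, s'})) (cech_size (T \<union> {s})) (cech_size (T \<union> {s'}))
      (cech_size T)
    (cech_map (T \<union> {s}) (T \<union> {s, s'})) (cech_map (T \<union> {s'}) (T \<union> {s, s'}))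
    (cech_map T (T \<union> {s})) (cech_map T (T \<union> {s'}))"
    unfolding A_def B_def C_def .
qed

lemma cech_size_empty: "cech_size {} = N"
  unfolding cech_size_def using bij_betw_same_card[OF bij_betw_cech_obj_empty[of N I f]] by simp

lemma rank_empty: "i < N \<Longrightarrow> rank {} (i, \<lambda>_. undefined) = i"
  unfolding rank_def by (rule order_rank_iso[OF bij_betw_cech_obj_empty]) (auto simp: cech_le_def)

lemma bij_betw_singleton:
  "s \<in> S \<Longrightarrow> bij_betw (\<lambda>j. (f s j, restrict (\<lambda>_. j) {s})) {..<I s} (cech_obj I N f {s})"
  using bij_betw_cech_obj_singleton[of I s N f] dmor_claw by blast

lemma cech_size_singleton: "s \<in> S \<Longrightarrow> cech_size {s} = I s"
  unfolding cech_size_def using bij_betw_same_card[OF bij_betw_singleton] by simp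

lemma unrank_singleton:
  assumes "s \<in> S" "j < I s"
  shows "unrank {s} j = (f s j, restrict (\<lambda>_. j) {s})"
proof -
  have "rank {s} (f s j, restrict (\<lambda>_. j) {s}) = j"
    unfolding rank_def using assms
    by (intro order_rank_iso[OF bij_betw_singleton] cech_le_singleton[of I s N f, OF dmor_claw])
  moreover have "(f s j, restrict (\<lambda>_. j) {s}) \<in> cech_obj I N f {s}"
    using bij_betw_singleton[OF assms(1)] assms(2) by (auto simp: bij_betw_def)
  ultimately show ?thesis using unrank_rank[of "{s}" "(f s j, restrict (\<lambda>_. j) {s})"] assms(1)
    by simp
qed

lemma cech_map_empty_singleton: "s \<in> S \<Longrightarrow> k < I s \<Longrightarrow> cech_map {} {s} k = f s k"
  using rank_empty dmor_less[OF dmor_claw]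
  by (simp add: cech_map_def unrank_singleton cech_proj_def restrict_def)

lemma is_cech_cube: "is_cech_cube S I N f cech_size cech_map"
  unfolding is_cech_cube_def
  by (simp add: is_cube strongly_cartesian cech_size_empty cech_size_singleton
      cech_map_empty_singleton meq_def)

end

lemma candidate_covering_iff_backwards_compatible:
  assumes "finite S" "\<forall>s\<in>S. dmor (I s) N (f s)"
  shows "candidate_covering S I N f \<longleftrightarrow> backwards_compatible S I N f"
proof
  assume "candidate_covering S I N f"
  then obtain Q M where "is_cech_cube S I N f Q M" by (auto simp: candidate_covering_def)
  with assms(1) show "backwards_compatible S I N f"
    by (intro cech_cube.backwards_compatible cech_cube.intro)
next
  assume "backwards_compatible S I N f"
  with assms have "backwards_compatible_claw S I N f"
    by (simp add: backwards_compatible_claw_def)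
  then show "candidate_covering S I N f"
    unfolding candidate_covering_def by (blast intro: backwards_compatible_claw.is_cech_cube)
qed

lemma cech_cube_formula: "finite S \<Longrightarrow> is_cech_cube S I N f Q M \<Longrightarrow> cech_formula S I N f Q M"
  by (intro cech_cube.cech_formula cech_cube.intro)

lemma cech_cube_bicartesian_iff_compatible:
  assumes "finite S" "is_cech_cube S I N f Q M"
  shows "strongly_bicartesian S Q M \<longleftrightarrow> compatible S I N f"
proof -
  interpret cech_cube S I N f Q M using assms by (rule cech_cube.intro)
  show ?thesis
    using cech compatible_if_cocartesian strongly_cocartesian_if_compatible
    by (auto simp: strongly_bicartesian_def is_cech_cube_def)
qed

theorem proposition4p1p4:
  fixes S :: "'a set" and I :: "'a \<Rightarrow> nat" and N :: nat and f :: "'a \<Rightarrow> nat \<Rightarrow> nat"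
  assumes "finite S"
    and "\<forall>s\<in>S. dmor (I s) N (f s)"
  shows "(candidate_covering S I N f \<longleftrightarrow> backwards_compatible S I N f)
    \<and> (backwards_compatible S I N f \<longrightarrow>
         (\<forall>Q M. is_cech_cube S I N f Q M \<longrightarrow> cech_formula S I N f Q M))
    \<and> (compatible S I N f \<longleftrightarrow>
         (\<exists>Q M. is_cech_cube S I N f Q M) \<and>
         (\<forall>Q M. is_cech_cube S I N f Q M \<longrightarrow> strongly_bicartesian S Q M))"
proof -
  note covering = candidate_covering_iff_backwards_compatible[OF assms]
  have "compatible S I N f \<Longrightarrow> \<exists>Q M. is_cech_cube S I N f Q M"
    using covering compatible_imp_backwards_compatible by (simp add: candidate_covering_def)
  then show ?thesis
    using covering cech_cube_formula[OF assms(1)] cech_cube_bicartesian_iff_compatible[OF assms(1)]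
    by blast
qed

end
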